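(* Suppose $\mathcal M$ is unichain. For every state $s\in\mathcal S$, the optimal activation advantage $\lambda\mapsto\alpha^*_s(\lambda)$ is $(2D_{\max}+1)$-Lipschitz continuous on $\mathbb R$, where $D_{\max}:=\max_{\pi\subseteq\mathcal S}D(P^\pi)$.
   Context: Setting. An MDP is $\mathcal M=(\mathcal S,\{0,1\},(P^a)_a,(r^a)_a)$, finite $\mathcal S$, row-stochastic $P^0,P^1$, rewards $r^0,r^1\in\mathbb R^{\mathcal S}$. A policy is a subset $\pi\subseteq\mathcal S$ of states where action 1 is played, inducing $P^\pi$, $r^\pi$; $\mathcal M$ is unichain if every $P^\pi$ has a single recurrent class. For $\lambda\in\mathbb R$, $\mathcal M(\lambda)$ has the same transitions and rewards $r^1-\lambda\mathbf 1$ (action 1), $r^0$ (action 0). For a unichain policy, bias $b^\pi(\lambda)$ solves $g^\pi\mathbf 1+b^\pi=r^\pi+P^\pi b^\pi$; activation advantage $\alpha^\pi_s(\lambda)=r^1_s-\lambda-r^0_s+(P^1_{s,\cdot}-P^0_{s,\cdot})\cdot b^\pi(\lambda)$. A policy is BO (bias optimal) in $\mathcal M(\lambda)$ if gain optimal and bias-maximal among gain-optimal policies; for unichain MDPs $\pi$ is BO iff $\alpha^\pi_s(\lambda)\ge0$ for $s\in\pi$, $\le0$ for $s\notin\pi$. The optimal activation advantage $\alpha^*_s(\lambda):=\alpha^\pi_s(\lambda)$ for any BO policy $\pi$ of $\mathcal M(\lambda)$ (independent of the choice); it is continuous and piecewise affine in $\lambda$. Diameter of unichain $P$ with recurrent class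 $\mathcal S_r$: $D(P)=\max_{s\in\mathcal S,s'\in\mathcal S_r}\mathbb E^P[\tau_{s,s'}]$. *)

theory Defs
  imports "HOL-Analysis.Analysis"
begin

text \<open>An MDP with finite state type 's, two actions 0 and 1, transition matrices P0 P1
 (functions 's \<Rightarrow> 's \<Rightarrow> real) and rewards r0 r1.\<close>

definition stochastic :: "('s::finite \<Rightarrow> 's \<Rightarrow> real) \<Rightarrow> bool" where
  "stochastic P \<longleftrightarrow> (\<forall>s t. 0 \<le> P s t) \<and> (\<forall>s. (\<Sum>t\<in>UNIV. P s t) = 1)"

text \<open>Policy \<pi> (set of states where action 1 is played): induced transitions and rewards
 in the MDP M(l) (action 1 reward r1 - l).\<close>

definition pol_P :: "('s \<Rightarrow> 's \<Rightarrow> real) \<Rightarrow> ('s \<Rightarrow> 's \<Rightarrow> real) \<Rightarrow> 's set \<Rightarrow> 's \<Rightarrow> 's \<Rightarrow> real" where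
  "pol_P P0 P1 \<pi> s t = (if s \<in> \<pi> then P1 s t else P0 s t)"

definition pol_r :: "('s \<Rightarrow> real) \<Rightarrow> ('s \<Rightarrow> real) \<Rightarrow> real \<Rightarrow> 's set \<Rightarrow> 's \<Rightarrow> real" where
  "pol_r r0 r1 l \<pi> s = (if s \<in> \<pi> then r1 s - l else r0 s)"

definition reach :: "('s \<Rightarrow> 's \<Rightarrow> real) \<Rightarrow> ('s \<times> 's) set" where
  "reach P = {(s, t). 0 < P s t}\<^sup>*"

definition recurrent :: "('s \<Rightarrow> 's \<Rightarrow> real) \<Rightarrow> 's \<Rightarrow> bool" where
  "recurrent P s \<longleftrightarrow> (\<forall>t. (s, t) \<in> reach P \<longrightarrow> (t, s) \<in> reach P)"

definition rec_classes :: "('s \<Rightarrow> 's \<Rightarrow> real) \<Rightarrow> 's set set" where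
  "rec_classes P = {C. \<exists>s. recurrent P s \<and> C = {t. (s, t) \<in> reach P}}"

definition unichain_chain :: "('s \<Rightarrow> 's \<Rightarrow> real) \<Rightarrow> bool" where
  "unichain_chain P \<longleftrightarrow> card (rec_classes P) = 1"

definition unichain :: "('s::finite \<Rightarrow> 's \<Rightarrow> real) \<Rightarrow> ('s \<Rightarrow> 's \<Rightarrow> real) \<Rightarrow> bool" where
  "unichain P0 P1 \<longleftrightarrow> (\<forall>\<pi>. unichain_chain (pol_P P0 P1 \<pi>))"

fun mat_pow :: "('s::finite \<Rightarrow> 's \<Rightarrow> real) \<Rightarrow> nat \<Rightarrow> 's \<Rightarrow> 's \<Rightarrow> real" where
  "mat_pow P 0 = (\<lambda>s t. if s = t then 1 else 0)"
| "mat_pow P (Suc n) = (\<lambda>s t. \<Sum>u\<in>UNIV. P s u * mat_pow P n u t)"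

definition mv :: "('s::finite \<Rightarrow> 's \<Rightarrow> real) \<Rightarrow> ('s \<Rightarrow> real) \<Rightarrow> 's \<Rightarrow> real" where
  "mv P v s = (\<Sum>t\<in>UNIV. P s t * v t)"

definition gain :: "('s::finite \<Rightarrow> 's \<Rightarrow> real) \<Rightarrow> ('s \<Rightarrow> real) \<Rightarrow> 's \<Rightarrow> real" where
  "gain P r s = lim (\<lambda>n. (\<Sum>k<n. mv (mat_pow P k) r s) / real n)"

definition bias :: "('s::finite \<Rightarrow> 's \<Rightarrow> real) \<Rightarrow> ('s \<Rightarrow> real) \<Rightarrow> 's \<Rightarrow> real" where
  "bias P r s = lim (\<lambda>N. (\<Sum>n<N. \<Sum>k<n. mv (mat_pow P k) (\<lambda>u. r u - gain P r u) s) / real N)"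

definition pgain where
  "pgain P0 P1 r0 r1 l \<pi> = gain (pol_P P0 P1 \<pi>) (pol_r r0 r1 l \<pi>)"

definition pbias where
  "pbias P0 P1 r0 r1 l \<pi> = bias (pol_P P0 P1 \<pi>) (pol_r r0 r1 l \<pi>)"

definition adv :: "('s::finite \<Rightarrow> 's \<Rightarrow> real) \<Rightarrow> ('s \<Rightarrow> 's \<Rightarrow> real) \<Rightarrow> ('s \<Rightarrow> real) \<Rightarrow> ('s \<Rightarrow> real)
    \<Rightarrow> real \<Rightarrow> 's set \<Rightarrow> 's \<Rightarrow> real" where
  "adv P0 P1 r0 r1 l \<pi> s = r1 s - l - r0 s
     + (\<Sum>t\<in>UNIV. (P1 s t - P0 s t) * pbias P0 P1 r0 r1 l \<pi> t)"

definition gain_opt where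
  "gain_opt P0 P1 r0 r1 l \<pi> \<longleftrightarrow>
     (\<forall>\<pi>' s. pgain P0 P1 r0 r1 l \<pi>' s \<le> pgain P0 P1 r0 r1 l \<pi> s)"

definition bias_opt where
  "bias_opt P0 P1 r0 r1 l \<pi> \<longleftrightarrow> gain_opt P0 P1 r0 r1 l \<pi> \<and>
     (\<forall>\<pi>'. gain_opt P0 P1 r0 r1 l \<pi>' \<longrightarrow>
        (\<forall>s. pbias P0 P1 r0 r1 l \<pi>' s \<le> pbias P0 P1 r0 r1 l \<pi> s))"

text \<open>Optimal activation advantage: the advantage of (any, here: a chosen) BO policy.\<close>

definition opt_adv where
  "opt_adv P0 P1 r0 r1 l s = adv P0 P1 r0 r1 l (SOME \<pi>. bias_opt P0 P1 r0 r1 l \<pi>) s"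

text \<open>Expected hitting time E[tau_{s,s'}], tau_{s,s'} = min{t \<ge> 0. X_t = s'} with X_0 = s,
 written as \<Sum>_{n\<ge>0} P(tau > n); P(tau > n) = P_s(X_0,...,X_n \<noteq> s') computed with the
 taboo matrix (column s' set to 0).\<close>

definition taboo :: "('s \<Rightarrow> 's \<Rightarrow> real) \<Rightarrow> 's \<Rightarrow> 's \<Rightarrow> 's \<Rightarrow> real" where
  "taboo P s' u t = (if t = s' then 0 else P u t)"

definition exp_hit :: "('s::finite \<Rightarrow> 's \<Rightarrow> real) \<Rightarrow> 's \<Rightarrow> 's \<Rightarrow> real" where
  "exp_hit P s s' = (\<Sum>n. if s = s' then 0 else (\<Sum>t\<in>UNIV. mat_pow (taboo P s') n s t))"

definition diameter :: "('s::finite \<Rightarrow> 's \<Rightarrow> real) \<Rightarrow> real" where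
  "diameter P = Max {exp_hit P s s' | s s'. recurrent P s'}"

definition D_max :: "('s::finite \<Rightarrow> 's \<Rightarrow> real) \<Rightarrow> ('s \<Rightarrow> 's \<Rightarrow> real) \<Rightarrow> real" where
  "D_max P0 P1 = Max ((\<lambda>\<pi>. diameter (pol_P P0 P1 \<pi>)) ` UNIV)"

end

theory Submission
  imports Defs
begin

text \<open>For a fixed policy \<open>\<pi>\<close> the gain and bias solve the Poisson equation of
  \<open>P\<^sup>\<pi>\<close>, whose data depend affinely on \<open>\<lambda>\<close>; hence \<open>\<alpha>\<^sup>\<pi>(\<lambda>)\<close> is affine.
  Its slope is \<open>-1 - (P\<^sup>1 - P\<^sup>0) \<delta>\<close>, where \<open>\<delta>\<close> solves the Poisson equation with
  reward \<open>1\<^sub>\<pi>\<close>.  Comparing \<open>\<delta>\<close> with its value at a recurrent state through the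
  expected hitting time of that state bounds the span of \<open>\<delta>\<close> by \<open>2 D(P\<^sup>\<pi>)\<close>, so
  the slope is at most \<open>2 D\<^sub>m\<^sub>a\<^sub>x + 1\<close> in absolute value.

  A policy is bias optimal iff its advantages have the right signs, and all policies with
  this property share their advantages (maximum principle for a unichain).  So \<open>\<alpha>\<^sup>*\<close>
  agrees with \<open>\<alpha>\<^sup>\<pi>\<close> on the closed set of \<open>\<lambda>\<close> where \<open>\<pi>\<close> has the right signs.
  These finitely many closed sets cover \<open>\<real>\<close>, and a function that is \<open>L\<close>-Lipschitz on
  each of them is \<open>L\<close>-Lipschitz on \<open>\<real>\<close>.\<close>

section \<open>Stochastic matrices\<close>

lemma stochastic_nonneg: "stochastic P \<Longrightarrow> 0 \<le> P s t"
  unfolding stochastic_def by auto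

lemma mv_id [simp]: "mv (\<lambda>s t. if s = t then 1 else 0) v = v"
proof
  fix s
  have "(\<Sum>t\<in>UNIV. (if s = t then 1 else 0) * v t) = (\<Sum>t\<in>UNIV. if s = t then v t else 0)"
    by (rule sum.cong) auto
  then show "mv (\<lambda>s t. if s = t then 1 else 0) v s = v s" unfolding mv_def by simp
qed

lemma mv_mat_pow_Suc: "mv (mat_pow P (Suc k)) v s = mv P (mv (mat_pow P k) v) s"
proof -
  have "mv (mat_pow P (Suc k)) v s = (\<Sum>t\<in>UNIV. \<Sum>u\<in>UNIV. P s u * (mat_pow P k u t * v t))"
    unfolding mv_def by (simp add: sum_distrib_right mult.assoc)
  also have "\<dots> = (\<Sum>u\<in>UNIV. \<Sum>t\<in>UNIV. P s u * (mat_pow P k u t * v t))"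
    by (rule sum.swap)
  finally show ?thesis
    unfolding mv_def by (simp add: sum_distrib_left)
qed

lemma mv_mat_pow_commute: "mv (mat_pow P k) (mv P v) s = mv (mat_pow P (Suc k)) v s"
proof (induction k arbitrary: s)
  case 0
  then show ?case by (simp only: mv_mat_pow_Suc mat_pow.simps(1) mv_id)
next
  case (Suc k)
  have "mv (mat_pow P (Suc k)) (mv P v) s = mv P (mv (mat_pow P k) (mv P v)) s"
    by (rule mv_mat_pow_Suc)
  also have "\<dots> = mv P (mv (mat_pow P (Suc k)) v) s"
    using Suc.IH by (metis ext)
  also have "\<dots> = mv (mat_pow P (Suc (Suc k))) v s"
    by (rule mv_mat_pow_Suc[symmetric])
  finally show ?case .
qed

lemma mat_pow_add: "mat_pow P (m + n) x t = (\<Sum>u\<in>UNIV. mat_pow P m x u * mat_pow P n u t)"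
proof (induction m arbitrary: x)
  case 0
  have "(\<Sum>u\<in>UNIV. mat_pow P 0 x u * mat_pow P n u t) = (\<Sum>u\<in>UNIV. if u = x then mat_pow P n u t else 0)"
    by (rule sum.cong) auto
  then show ?case by simp
next
  case (Suc m)
  have "mat_pow P (Suc m + n) x t = (\<Sum>v\<in>UNIV. \<Sum>u\<in>UNIV. P x v * (mat_pow P m v u * mat_pow P n u t))"
    by (simp add: Suc.IH sum_distrib_left)
  also have "\<dots> = (\<Sum>u\<in>UNIV. \<Sum>v\<in>UNIV. P x v * (mat_pow P m v u * mat_pow P n u t))"
    by (rule sum.swap)
  finally show ?case
    by (simp only: mat_pow.simps sum_distrib_right mult.assoc)
qed

lemma mv_add: "mv P (\<lambda>t. v t + w t) s = mv P v s + mv P w s"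
  unfolding mv_def by (simp add: distrib_left sum.distrib)

lemma mv_diff: "mv P (\<lambda>t. v t - w t) s = mv P v s - mv P w s"
  unfolding mv_def by (simp add: right_diff_distrib sum_subtractf)

lemma mv_cmult: "mv P (\<lambda>t. c * v t) s = c * mv P v s"
  unfolding mv_def by (simp add: sum_distrib_left ac_simps)

lemma mv_lincomb: "mv P (\<lambda>t. a * v t + b * w t) s = a * mv P v s + b * mv P w s"
  by (simp add: mv_add mv_cmult)

lemma mv_sum: "mv P (\<lambda>t. \<Sum>i\<in>I. v i t) s = (\<Sum>i\<in>I. mv P (v i) s)"
  unfolding mv_def by (simp add: sum_distrib_left) (rule sum.swap)

lemma mv_indicator: "mv P (\<lambda>u. if u = t then 1 else 0) s = P s t"
proof -
  have "mv P (\<lambda>u. if u = t then 1 else 0) s = (\<Sum>u\<in>UNIV. if u = t then P s u else 0)"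
    unfolding mv_def by (rule sum.cong) auto
  then show ?thesis by simp
qed

lemma mv_const: "stochastic P \<Longrightarrow> mv P (\<lambda>_. c) s = c"
  unfolding mv_def stochastic_def by (simp add: sum_distrib_right[symmetric])

lemma mv_mono: "(\<And>s t. 0 \<le> P s t) \<Longrightarrow> (\<And>t. v t \<le> w t) \<Longrightarrow> mv P v s \<le> mv P w s"
  unfolding mv_def by (intro sum_mono mult_left_mono) auto

lemma mat_pow_nonneg: "(\<And>s t. 0 \<le> P s t) \<Longrightarrow> 0 \<le> mat_pow P k s t"
  by (induction k arbitrary: s t) (auto intro!: sum_nonneg)

lemma stochastic_mat_pow: "stochastic P \<Longrightarrow> stochastic (mat_pow P k)"
proof (induction k)
  case 0
  then show ?case unfolding stochastic_def by auto
next
  case (Suc k)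
  have "(\<Sum>t\<in>UNIV. mat_pow P (Suc k) s t) = (\<Sum>u\<in>UNIV. P s u * (\<Sum>t\<in>UNIV. mat_pow P k u t))" for s
    by (simp add: sum_distrib_left) (rule sum.swap)
  moreover have "0 \<le> mat_pow P (Suc k) s t" for s t
    using mat_pow_nonneg stochastic_nonneg[OF Suc.prems] by blast
  ultimately show ?case
    using Suc unfolding stochastic_def by simp
qed

lemma mv_le_const: "stochastic P \<Longrightarrow> (\<And>t. v t \<le> c) \<Longrightarrow> mv P v s \<le> c"
  using mv_mono[of P v "\<lambda>_. c"] mv_const stochastic_nonneg by metis

lemma const_le_mv: "stochastic P \<Longrightarrow> (\<And>t. c \<le> v t) \<Longrightarrow> c \<le> mv P v s"
  using mv_mono[of P "\<lambda>_. c" v] mv_const stochastic_nonneg by metis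

lemma abs_mv_le:
  assumes "stochastic P" "\<And>t. \<bar>v t\<bar> \<le> c"
  shows "\<bar>mv P v s\<bar> \<le> c"
proof -
  have "v t \<le> c" "- c \<le> v t" for t
    using assms(2)[of t] by auto
  then have "mv P v s \<le> c" "- c \<le> mv P v s"
    using assms(1) by (auto intro: mv_le_const const_le_mv)
  then show ?thesis by linarith
qed

lemma abs_mv_le_row_sum:
  assumes "\<And>s t. 0 \<le> P s t" "\<And>t. \<bar>v t\<bar> \<le> c"
  shows "\<bar>mv P v s\<bar> \<le> c * (\<Sum>t\<in>UNIV. P s t)"
proof -
  have "\<bar>mv P v s\<bar> \<le> (\<Sum>t\<in>UNIV. \<bar>P s t * v t\<bar>)" unfolding mv_def by (rule sum_abs)
  also have "\<dots> \<le> (\<Sum>t\<in>UNIV. P s t * c)"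
    using assms by (intro sum_mono) (auto simp: abs_mult intro: mult_left_mono)
  finally show ?thesis by (simp add: sum_distrib_left ac_simps)
qed

lemma abs_mv_diff_le_span:
  fixes v :: "'s::finite \<Rightarrow> real"
  assumes "stochastic P" "stochastic Q" and span: "\<And>x y. \<bar>v x - v y\<bar> \<le> c"
  shows "\<bar>mv P v s - mv Q v s\<bar> \<le> c"
proof -
  define m where "m = Min (range v)"
  have "m \<in> range v" unfolding m_def by (rule Min_in) auto
  then obtain a where a: "v a = m" by auto
  have lo: "m \<le> v t" for t unfolding m_def by (rule Min_le) auto
  have hi: "v t \<le> m + c" for t using span[of t a] a by linarith
  have "m \<le> mv P v s" "mv P v s \<le> m + c" "m \<le> mv Q v s" "mv Q v s \<le> m + c"
    using assms(1,2) lo hi by (auto intro: mv_le_const const_le_mv)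
  then show ?thesis by linarith
qed

lemma stochastic_ex_pos:
  assumes "stochastic P" shows "\<exists>t. 0 < P s t"
proof (rule ccontr)
  assume "\<nexists>t. 0 < P s t"
  then have "(\<Sum>t\<in>UNIV. P s t) \<le> 0" by (intro sum_nonpos) (auto simp: not_less)
  then show False using assms unfolding stochastic_def by simp
qed


section \<open>Closed sets of a unichain\<close>

definition closed_set :: "('s \<Rightarrow> 's \<Rightarrow> real) \<Rightarrow> 's set \<Rightarrow> bool" where
  "closed_set P C \<longleftrightarrow> (\<forall>s t. s \<in> C \<longrightarrow> 0 < P s t \<longrightarrow> t \<in> C)"

lemma reach_refl [simp]: "(s, s) \<in> reach P"
  unfolding reach_def by simp

lemma reach_trans: "(s, t) \<in> reach P \<Longrightarrow> (t, u) \<in> reach P \<Longrightarrow> (s, u) \<in> reach P"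
  unfolding reach_def by (rule rtrancl_trans)

lemma closed_set_reach:
  assumes "closed_set P C" "s \<in> C" "(s, t) \<in> reach P"
  shows "t \<in> C"
  using assms(3) unfolding reach_def
proof (induction rule: rtrancl_induct)
  case base
  then show ?case using assms(2) by simp
next
  case (step t u)
  then show ?case using assms(1) unfolding closed_set_def by auto
qed

lemma closed_set_reachable: "closed_set P {t. (s, t) \<in> reach P}"
  unfolding closed_set_def reach_def by (auto intro: rtrancl_into_rtrancl)

text \<open>A state of \<open>C\<close> with the fewest reachable states is recurrent.\<close>

lemma closed_set_has_recurrent:
  fixes P :: "'s::finite \<Rightarrow> 's \<Rightarrow> real"
  assumes "closed_set P C" "s0 \<in> C"
  shows "\<exists>s\<in>C. recurrent P s"
proof -
  define R where "R s = {t. (s, t) \<in> reach P}" for s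
  obtain s where s: "s \<in> C" "\<forall>s'. s' \<in> C \<longrightarrow> card (R s) \<le> card (R s')"
    using ex_has_least_nat[of "\<lambda>s. s \<in> C" s0 "\<lambda>s. card (R s)"] assms(2) by (auto simp only:)
  have "(t, s) \<in> reach P" if st: "(s, t) \<in> reach P" for t
  proof -
    have sub: "R t \<subseteq> R s" unfolding R_def using reach_trans[OF st] by blast
    have "card (R s) \<le> card (R t)" using s(2) closed_set_reach[OF assms(1) s(1) st] by simp
    then have "R t = R s" using card_seteq[OF finite sub] by simp
    then show ?thesis unfolding R_def by auto
  qed
  then show ?thesis using s(1) unfolding recurrent_def by blast
qed

lemma exists_recurrent:
  fixes P :: "'s::finite \<Rightarrow> 's \<Rightarrow> real"
  shows "\<exists>s. recurrent P s"
  using closed_set_has_recurrent[of P UNIV] unfolding closed_set_def by blast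

lemma unichain_recurrent_reach:
  assumes "unichain_chain P" "recurrent P s" "recurrent P t"
  shows "(s, t) \<in> reach P"
proof -
  obtain C where "rec_classes P = {C}"
    using assms(1) unfolding unichain_chain_def by (meson card_1_singletonE)
  moreover have "{u. (s, u) \<in> reach P} \<in> rec_classes P" "{u. (t, u) \<in> reach P} \<in> rec_classes P"
    using assms(2,3) unfolding rec_classes_def by auto
  ultimately have "{u. (s, u) \<in> reach P} = {u. (t, u) \<in> reach P}" by simp
  then show ?thesis by (metis mem_Collect_eq reach_refl)
qed

lemma unichain_closed_sets_meet:
  fixes P :: "'s::finite \<Rightarrow> 's \<Rightarrow> real"
  assumes "unichain_chain P" "closed_set P C" "closed_set P C'" "C \<noteq> {}" "C' \<noteq> {}"
  shows "C \<inter> C' \<noteq> {}"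
proof -
  obtain s where s: "s \<in> C" "recurrent P s" using closed_set_has_recurrent[OF assms(2)] assms(4) by blast
  obtain t where t: "t \<in> C'" "recurrent P t" using closed_set_has_recurrent[OF assms(3)] assms(5) by blast
  have "s \<in> C'" using closed_set_reach[OF assms(3) t(1) unichain_recurrent_reach[OF assms(1) t(2) s(2)]] .
  then show ?thesis using s(1) by blast
qed

lemma unichain_reach_recurrent:
  fixes P :: "'s::finite \<Rightarrow> 's \<Rightarrow> real"
  assumes "unichain_chain P" "recurrent P t"
  shows "(s, t) \<in> reach P"
proof -
  obtain u where "(s, u) \<in> reach P" "recurrent P u"
    using closed_set_has_recurrent[OF closed_set_reachable[of P s], of s] by auto
  then show ?thesis using unichain_recurrent_reach[OF assms(1) _ assms(2)] reach_trans by metis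
qed


lemma closed_set_argmax:
  fixes v :: "'s::finite \<Rightarrow> real"
  assumes P: "stochastic P" and sub: "\<And>s. v s \<le> mv P v s"
  shows "closed_set P {s. v s = Max (range v)}"
  unfolding closed_set_def
proof (intro allI impI)
  fix s t assume s: "s \<in> {s. v s = Max (range v)}" and pst: "0 < P s t"
  define m where "m = Max (range v)"
  have le: "v u \<le> m" for u unfolding m_def by (rule Max_ge) auto
  have "P s t * (m - v t) \<le> (\<Sum>u\<in>UNIV. P s u * (m - v u))"
    by (rule member_le_sum) (use le stochastic_nonneg[OF P] in auto)
  also have "\<dots> = m - mv P v s"
    using P unfolding mv_def stochastic_def
    by (simp add: right_diff_distrib sum_subtractf sum_distrib_right[symmetric])
  also have "\<dots> \<le> 0" using sub[of s] s unfolding m_def by simp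
  finally have "m \<le> v t" using pst by (simp add: mult_le_0_iff)
  then have "v t = m" using le[of t] by linarith
  then show "t \<in> {s. v s = Max (range v)}" unfolding m_def by simp
qed

lemma closed_set_argmin:
  fixes v :: "'s::finite \<Rightarrow> real"
  assumes P: "stochastic P" and super: "\<And>s. mv P v s \<le> v s"
  shows "closed_set P {s. v s = Min (range v)}"
proof -
  have "closed_set P {s. - v s = Max (range (\<lambda>s. - v s))}"
  proof (rule closed_set_argmax[OF P])
    fix s
    have "mv P (\<lambda>s. - v s) s = - mv P v s" unfolding mv_def by (simp add: sum_negf)
    then show "- v s \<le> mv P (\<lambda>s. - v s) s" using super[of s] by simp
  qed
  moreover have "Max (range (\<lambda>s. - v s)) = - Min (range v)"
    using minus_Min_eq_Max[of "range v", symmetric] by (simp add: image_image del: minus_Min_eq_Max)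
  ultimately show ?thesis by (simp del: minus_Min_eq_Max)
qed

lemma constant_if_argmax_meets_argmin:
  fixes v :: "'s::finite \<Rightarrow> real"
  assumes "{s. v s = Max (range v)} \<inter> {s. v s = Min (range v)} \<noteq> {}"
  shows "v s = v t"
proof -
  obtain u where u: "v u = Max (range v)" "v u = Min (range v)" using assms by auto
  have "v w = v u" for w
  proof -
    have "v w \<le> Max (range v)" "Min (range v) \<le> v w" by (simp_all add: Max_ge Min_le)
    then show ?thesis using u by linarith
  qed
  from this[of s] this[of t] show ?thesis by simp
qed

lemma argmax_argmin_nonempty:
  fixes v :: "'s::finite \<Rightarrow> real"
  shows "{s. v s = Max (range v)} \<noteq> {}" "{s. v s = Min (range v)} \<noteq> {}"
proof -
  have "Max (range v) \<in> range v" "Min (range v) \<in> range v" by (auto intro!: Max_in Min_in)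
  then obtain a b where "Max (range v) = v a" "Min (range v) = v b" by blast
  then show "{s. v s = Max (range v)} \<noteq> {}" "{s. v s = Min (range v)} \<noteq> {}" by auto
qed

lemma unichain_harmonic_const:
  fixes v :: "'s::finite \<Rightarrow> real"
  assumes P: "stochastic P" "unichain_chain P" and harm: "\<And>s. mv P v s = v s"
  shows "v s = v t"
proof (rule constant_if_argmax_meets_argmin)
  have "closed_set P {s. v s = Max (range v)}" "closed_set P {s. v s = Min (range v)}"
    using closed_set_argmax[OF P(1)] closed_set_argmin[OF P(1)] harm by auto
  then show "{s. v s = Max (range v)} \<inter> {s. v s = Min (range v)} \<noteq> {}"
    by (rule unichain_closed_sets_meet[OF P(2)]) (rule argmax_argmin_nonempty)+
qed


section \<open>The Poisson equation of a unichain\<close>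

lemma const_in_range_I_minus_P_eq_0:
  fixes y :: "'s::finite \<Rightarrow> real"
  assumes P: "stochastic P" and y: "\<And>s. y s - mv P y s = c"
  shows "c = 0"
proof -
  have "Max (range y) \<in> range y" "Min (range y) \<in> range y" by (auto intro!: Max_in Min_in)
  then obtain a b where a: "y a = Max (range y)" and b: "y b = Min (range y)" by (metis imageE)
  have "mv P y a \<le> y a" by (rule mv_le_const[OF P]) (simp add: a Max_ge)
  moreover have "y b \<le> mv P y b" by (rule const_le_mv[OF P]) (simp add: b Min_le)
  ultimately show ?thesis using y[of a] y[of b] by linarith
qed

text \<open>The linear map \<open>y \<mapsto> (I - P) y + y(s\<^sub>0)\<close> on \<open>\<real>\<^sup>S\<close> is injective (a kernel element is
  harmonic, hence constant, and then zero), hence surjective.\<close>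

lemma unichain_range_I_minus_P:
  fixes P :: "'s::finite \<Rightarrow> 's \<Rightarrow> real"
  assumes P: "stochastic P" "unichain_chain P"
  shows "\<exists>c y. \<forall>s. v s = c + (y s - mv P y s)"
proof -
  fix s0 :: 's
  define \<phi> :: "real^'s \<Rightarrow> real^'s" where
    "\<phi> z = (\<chi> s. z $ s - mv P (($) z) s + z $ s0)" for z
  have lin: "linear \<phi>"
  proof (rule linearI)
    fix a b :: "real^'s" and r :: real
    have "($) (a + b) = (\<lambda>t. a $ t + b $ t)" "($) (r *\<^sub>R a) = (\<lambda>t. r * a $ t)" by auto
    then show "\<phi> (a + b) = \<phi> a + \<phi> b" "\<phi> (r *\<^sub>R a) = r *\<^sub>R \<phi> a"
      unfolding \<phi>_def by (simp_all add: vec_eq_iff mv_add mv_cmult algebra_simps)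
  qed
  have "inj \<phi>"
    unfolding linear_injective_0[OF lin]
  proof (intro allI impI)
    fix z assume z0: "\<phi> z = 0"
    have "z $ s - mv P (($) z) s + z $ s0 = 0" for s
      using z0 unfolding \<phi>_def by (simp add: vec_eq_iff)
    then have e: "z $ s - mv P (($) z) s = - z $ s0" for s
      by (simp add: eq_neg_iff_add_eq_0)
    have y0: "z $ s0 = 0" using const_in_range_I_minus_P_eq_0[OF P(1) e] by simp
    have "mv P (($) z) s = z $ s" for s
      using e[of s] y0 by simp
    then have "z $ s = z $ s0" for s
      by (rule unichain_harmonic_const[OF P])
    then show "z = 0" using y0 by (simp add: vec_eq_iff)
  qed
  then obtain z where "\<phi> z = vec_lambda v"
    using linear_inj_imp_surj[OF lin] by (metis surjE)
  then have "z $ s - mv P (($) z) s + z $ s0 = v s" for s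
    unfolding \<phi>_def by (simp add: vec_eq_iff)
  then have "v s = z $ s0 + (z $ s - mv P (($) z) s)" for s
    by (metis add.commute)
  then show ?thesis by blast
qed

definition cesaro :: "('s::finite \<Rightarrow> 's \<Rightarrow> real) \<Rightarrow> ('s \<Rightarrow> real) \<Rightarrow> 's \<Rightarrow> nat \<Rightarrow> real" where
  "cesaro P v s n = (\<Sum>k<n. mv (mat_pow P k) v s) / real n"

lemma sum_mv_mat_pow_telescope:
  "(\<Sum>k<n. mv (mat_pow P k) (\<lambda>t. y t - mv P y t) s) = y s - mv (mat_pow P n) y s"
proof (induction n)
  case (Suc n)
  have "mv (mat_pow P n) (\<lambda>t. y t - mv P y t) s = mv (mat_pow P n) y s - mv (mat_pow P (Suc n)) y s"
    by (simp add: mv_diff mv_mat_pow_commute)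
  then show ?case using Suc by simp
qed simp

lemma bounded_over_real_tendsto_0:
  assumes "\<And>n. \<bar>f n\<bar> \<le> c"
  shows "(\<lambda>n. f n / real n) \<longlonglongrightarrow> 0"
proof (rule Lim_null_comparison)
  show "\<forall>\<^sub>F n in sequentially. norm (f n / real n) \<le> c / real n"
    using assms by (auto intro!: eventuallyI divide_right_mono simp: abs_divide)
qed (rule lim_const_over_n)

lemma abs_mv_mat_pow_le_Max:
  fixes y :: "'s::finite \<Rightarrow> real"
  assumes "stochastic P"
  shows "\<bar>mv (mat_pow P n) y s\<bar> \<le> Max (range (\<lambda>t. \<bar>y t\<bar>))"
  by (rule abs_mv_le[OF stochastic_mat_pow[OF assms]]) simp

lemma cesaro_diff_tendsto_0:
  fixes y :: "'s::finite \<Rightarrow> real"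
  assumes "stochastic P"
  shows "(\<lambda>n. (y s - mv (mat_pow P n) y s) / real n) \<longlonglongrightarrow> 0"
proof (rule bounded_over_real_tendsto_0)
  fix n
  have "\<bar>y s\<bar> \<le> Max (range (\<lambda>t. \<bar>y t\<bar>))" by simp
  then show "\<bar>y s - mv (mat_pow P n) y s\<bar> \<le> 2 * Max (range (\<lambda>t. \<bar>y t\<bar>))"
    using abs_mv_mat_pow_le_Max[OF assms, of n y s] by linarith
qed

text \<open>Writing \<open>v = c + (I - P) y\<close>, the Cesaro averages of \<open>v\<close> are \<open>c + (y - P\<^sup>n y) / n\<close>.\<close>

lemma unichain_cesaro_convergent:
  fixes P :: "'s::finite \<Rightarrow> 's \<Rightarrow> real"
  assumes P: "stochastic P" "unichain_chain P"
  shows "\<exists>c. \<forall>s. cesaro P v s \<longlonglongrightarrow> c"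
proof -
  obtain c y where v: "v = (\<lambda>t. c + (y t - mv P y t))"
    using unichain_range_I_minus_P[OF P] by blast
  have "cesaro P v s \<longlonglongrightarrow> c" for s
  proof -
    have "(\<Sum>k<n. mv (mat_pow P k) v s) = (\<Sum>k<n. c + mv (mat_pow P k) (\<lambda>t. y t - mv P y t) s)" for n
      unfolding v by (simp only: mv_add mv_const[OF stochastic_mat_pow[OF P(1)]])
    then have "cesaro P v s n = c + (y s - mv (mat_pow P n) y s) / real n" if "n > 0" for n
      unfolding cesaro_def using that by (simp add: sum.distrib sum_mv_mat_pow_telescope field_simps)
    then have "\<forall>\<^sub>F n in sequentially. c + (y s - mv (mat_pow P n) y s) / real n = cesaro P v s n"
      by (auto intro!: eventually_sequentiallyI[of 1])
    moreover have "(\<lambda>n. c + (y s - mv (mat_pow P n) y s) / real n) \<longlonglongrightarrow> c"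
      using tendsto_add[OF tendsto_const cesaro_diff_tendsto_0[OF P(1)]] by simp
    ultimately show ?thesis by (rule Lim_transform_eventually[rotated])
  qed
  then show ?thesis by blast
qed

text \<open>The occupation frequencies have the same Cesaro limit from every start state, so the
  start state \<open>undefined\<close> is immaterial.\<close>

definition stat_dist :: "('s::finite \<Rightarrow> 's \<Rightarrow> real) \<Rightarrow> 's \<Rightarrow> real" where
  "stat_dist P t = lim (cesaro P (\<lambda>u. if u = t then 1 else 0) undefined)"

lemma cesaro_indicator_tendsto:
  fixes P :: "'s::finite \<Rightarrow> 's \<Rightarrow> real"
  assumes P: "stochastic P" "unichain_chain P"
  shows "cesaro P (\<lambda>u. if u = t then 1 else 0) s \<longlonglongrightarrow> stat_dist P t"
proof -
  obtain c where c: "\<And>s. cesaro P (\<lambda>u. if u = t then 1 else 0) s \<longlonglongrightarrow> c"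
    using unichain_cesaro_convergent[OF P] by blast
  then have "stat_dist P t = c" unfolding stat_dist_def by (rule limI)
  then show ?thesis using c by simp
qed

lemma cesaro_tendsto_stat_dist:
  fixes P :: "'s::finite \<Rightarrow> 's \<Rightarrow> real"
  assumes P: "stochastic P" "unichain_chain P"
  shows "cesaro P v s \<longlonglongrightarrow> (\<Sum>t\<in>UNIV. stat_dist P t * v t)"
proof -
  have "cesaro P v s = (\<lambda>n. \<Sum>t\<in>UNIV. cesaro P (\<lambda>u. if u = t then 1 else 0) s n * v t)"
  proof
    fix n
    have "(\<Sum>k<n. mv (mat_pow P k) v s) = (\<Sum>k<n. \<Sum>t\<in>UNIV. mat_pow P k s t * v t)"
      by (simp add: mv_def)
    also have "\<dots> = (\<Sum>t\<in>UNIV. \<Sum>k<n. mat_pow P k s t * v t)"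
      by (rule sum.swap)
    also have "\<dots> = (\<Sum>t\<in>UNIV. (\<Sum>k<n. mv (mat_pow P k) (\<lambda>u. if u = t then 1 else 0) s) * v t)"
      by (simp add: mv_indicator sum_distrib_right)
    finally show "cesaro P v s n = (\<Sum>t\<in>UNIV. cesaro P (\<lambda>u. if u = t then 1 else 0) s n * v t)"
      unfolding cesaro_def by (simp add: sum_divide_distrib[symmetric])
  qed
  then show ?thesis
    by (simp only:) (intro tendsto_intros cesaro_indicator_tendsto[OF P])
qed

lemma stat_dist_nonneg:
  fixes P :: "'s::finite \<Rightarrow> 's \<Rightarrow> real"
  assumes P: "stochastic P" "unichain_chain P"
  shows "0 \<le> stat_dist P t"
proof (rule LIMSEQ_le_const[OF cesaro_indicator_tendsto[OF P, of t undefined]])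
  show "\<exists>N. \<forall>n\<ge>N. 0 \<le> cesaro P (\<lambda>u. if u = t then 1 else 0) undefined n"
    unfolding cesaro_def mv_indicator
    using mat_pow_nonneg[of P] stochastic_nonneg[OF P(1)] by (auto intro!: divide_nonneg_nonneg sum_nonneg)
qed

lemma stat_dist_sum:
  fixes P :: "'s::finite \<Rightarrow> 's \<Rightarrow> real"
  assumes P: "stochastic P" "unichain_chain P"
  shows "(\<Sum>t\<in>UNIV. stat_dist P t) = 1"
proof -
  have "cesaro P (\<lambda>_. 1) s n = 1" if "n > 0" for s n
    unfolding cesaro_def using that by (simp add: mv_const[OF stochastic_mat_pow[OF P(1)]])
  then have "cesaro P (\<lambda>_. 1) s \<longlonglongrightarrow> 1" for s
    by (intro Lim_transform_eventually[OF tendsto_const] eventually_sequentiallyI[of 1]) simp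
  with cesaro_tendsto_stat_dist[OF P, of "\<lambda>_. 1"] show ?thesis
    using LIMSEQ_unique by fastforce
qed

lemma stat_dist_stationary:
  fixes P :: "'s::finite \<Rightarrow> 's \<Rightarrow> real"
  assumes P: "stochastic P" "unichain_chain P"
  shows "(\<Sum>t\<in>UNIV. stat_dist P t * mv P v t) = (\<Sum>t\<in>UNIV. stat_dist P t * v t)"
proof -
  fix s :: 's
  have "(\<Sum>k<n. mv (mat_pow P k) (mv P v) s) = (\<Sum>k<n. mv (mat_pow P k) v s) + mv (mat_pow P n) v s - v s"
    for n by (induction n) (simp_all add: mv_mat_pow_commute)
  then have "cesaro P v s n - cesaro P (mv P v) s n = (v s - mv (mat_pow P n) v s) / real n" for n
    unfolding cesaro_def by (simp add: diff_divide_distrib add_divide_distrib)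
  then have "(\<lambda>n. cesaro P v s n - cesaro P (mv P v) s n) \<longlonglongrightarrow> 0"
    using cesaro_diff_tendsto_0[OF P(1)] by simp
  moreover have "(\<lambda>n. cesaro P v s n - cesaro P (mv P v) s n) \<longlonglongrightarrow>
      (\<Sum>t\<in>UNIV. stat_dist P t * v t) - (\<Sum>t\<in>UNIV. stat_dist P t * mv P v t)"
    by (intro tendsto_diff cesaro_tendsto_stat_dist[OF P])
  ultimately show ?thesis using LIMSEQ_unique by fastforce
qed

lemma stationary_mat_pow:
  fixes \<nu> :: "'s::finite \<Rightarrow> real"
  assumes st: "\<And>u. (\<Sum>t\<in>UNIV. \<nu> t * P t u) = \<nu> u"
  shows "(\<Sum>t\<in>UNIV. \<nu> t * mv (mat_pow P k) w t) = (\<Sum>t\<in>UNIV. \<nu> t * w t)"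
proof (induction k arbitrary: w)
  case (Suc k)
  have "(\<Sum>t\<in>UNIV. \<nu> t * mv (mat_pow P (Suc k)) w t) = (\<Sum>t\<in>UNIV. \<Sum>u\<in>UNIV. \<nu> t * P t u * mv (mat_pow P k) w u)"
    unfolding mv_mat_pow_Suc by (simp add: mv_def sum_distrib_left ac_simps)
  also have "\<dots> = (\<Sum>u\<in>UNIV. (\<Sum>t\<in>UNIV. \<nu> t * P t u) * mv (mat_pow P k) w u)"
    by (subst sum.swap) (simp add: sum_distrib_right)
  finally show ?case using Suc by (simp add: st)
qed simp

lemma stat_dist_unique:
  fixes P :: "'s::finite \<Rightarrow> 's \<Rightarrow> real"
  assumes P: "stochastic P" "unichain_chain P"
    and sum1: "(\<Sum>t\<in>UNIV. \<nu> t) = 1" and st: "\<And>u. (\<Sum>t\<in>UNIV. \<nu> t * P t u) = \<nu> u"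
  shows "\<nu> = stat_dist P"
proof
  fix u
  define w :: "'s \<Rightarrow> real" where "w t = (if t = u then 1 else 0)" for t
  have "(\<Sum>t\<in>UNIV. \<nu> t * cesaro P w t n) = \<nu> u" if "n > 0" for n
  proof -
    have "(\<Sum>t\<in>UNIV. \<nu> t * cesaro P w t n) = (\<Sum>k<n. \<Sum>t\<in>UNIV. \<nu> t * mv (mat_pow P k) w t) / real n"
      unfolding cesaro_def by (simp add: sum_divide_distrib sum_distrib_left) (rule sum.swap)
    then show ?thesis using that by (simp add: stationary_mat_pow[OF st] w_def if_distrib cong: if_cong)
  qed
  then have "(\<lambda>n. \<Sum>t\<in>UNIV. \<nu> t * cesaro P w t n) \<longlonglongrightarrow> \<nu> u"
    by (intro Lim_transform_eventually[OF tendsto_const] eventually_sequentiallyI[of 1]) simp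
  moreover have "(\<lambda>n. \<Sum>t\<in>UNIV. \<nu> t * cesaro P w t n) \<longlonglongrightarrow> (\<Sum>t\<in>UNIV. \<nu> t * stat_dist P u)"
    unfolding w_def by (intro tendsto_intros cesaro_indicator_tendsto[OF P])
  ultimately show "\<nu> u = stat_dist P u"
    using LIMSEQ_unique sum1 by (fastforce simp: sum_distrib_right[symmetric])
qed

lemma superharmonic_ge_stat_mean:
  fixes P :: "'s::finite \<Rightarrow> 's \<Rightarrow> real"
  assumes P: "stochastic P" "unichain_chain P" and super: "\<And>t. mv P v t \<le> v t"
  shows "(\<Sum>t\<in>UNIV. stat_dist P t * v t) \<le> v s"
proof -
  have pow: "mv (mat_pow P k) v s \<le> v s" for k s
  proof (induction k arbitrary: s)
    case (Suc k)
    have "mv P (mv (mat_pow P k) v) s \<le> mv P v s"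
      by (rule mv_mono) (auto intro: stochastic_nonneg[OF P(1)] Suc.IH)
    then show ?case using super[of s] by (simp only: mv_mat_pow_Suc)
  qed simp
  have "cesaro P v s n \<le> v s" if "n > 0" for n
  proof -
    have "(\<Sum>k<n. mv (mat_pow P k) v s) \<le> (\<Sum>k<n. v s)" by (intro sum_mono pow)
    then show ?thesis unfolding cesaro_def using that by (simp add: divide_le_eq mult.commute)
  qed
  then show ?thesis
    by (intro LIMSEQ_le_const2[OF cesaro_tendsto_stat_dist[OF P, of v s]] exI[of _ 1]) simp
qed

text \<open>If \<open>v = e + P v\<close> with \<open>e \<ge> 0\<close>, then \<open>v\<close> is superharmonic, so it dominates its stationary
  mean, and one step more gives the gap \<open>e\<close>.\<close>

lemma stat_mean_plus_defect_le:
  fixes P :: "'s::finite \<Rightarrow> 's \<Rightarrow> real"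
  assumes P: "stochastic P" "unichain_chain P"
    and eq: "\<And>t. v t = e t + mv P v t" and e: "\<And>t. 0 \<le> e t"
  shows "(\<Sum>t\<in>UNIV. stat_dist P t * v t) + e s \<le> v s"
proof -
  have "(\<Sum>t\<in>UNIV. stat_dist P t * v t) \<le> v t" for t
    by (rule superharmonic_ge_stat_mean[OF P]) (metis e eq le_add_same_cancel2)
  then have "(\<Sum>t\<in>UNIV. stat_dist P t * v t) \<le> mv P v s" by (rule const_le_mv[OF P(1)])
  then show ?thesis using eq[of s] by linarith
qed

lemma poisson_solvable:
  fixes P :: "'s::finite \<Rightarrow> 's \<Rightarrow> real"
  assumes P: "stochastic P" "unichain_chain P"
  shows "\<exists>g h. \<forall>s. g + h s = r s + mv P h s"
proof -
  obtain c y where "\<And>s. r s = c + (y s - mv P y s)" using unichain_range_I_minus_P[OF P] by blast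
  then have "\<forall>s. c + y s = r s + mv P y s" by (simp add: algebra_simps)
  then show ?thesis by blast
qed

lemma poisson_gain_eq_stat_mean:
  fixes P :: "'s::finite \<Rightarrow> 's \<Rightarrow> real"
  assumes P: "stochastic P" "unichain_chain P" and poisson: "\<And>s. g + h s = r s + mv P h s"
  shows "g = (\<Sum>t\<in>UNIV. stat_dist P t * r t)"
proof -
  have "(\<Sum>t\<in>UNIV. stat_dist P t * r t)
      = g * (\<Sum>t\<in>UNIV. stat_dist P t) + (\<Sum>t\<in>UNIV. stat_dist P t * h t) - (\<Sum>t\<in>UNIV. stat_dist P t * mv P h t)"
    using poisson by (simp add: eq_diff_eq[THEN iffD2, OF poisson[symmetric]] algebra_simps sum.distrib
        sum_subtractf sum_distrib_left)
  then show ?thesis using stat_dist_stationary[OF P, of h] stat_dist_sum[OF P] by simp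
qed

lemma gain_eq_poisson:
  fixes P :: "'s::finite \<Rightarrow> 's \<Rightarrow> real"
  assumes P: "stochastic P" "unichain_chain P" and poisson: "\<And>s. g + h s = r s + mv P h s"
  shows "gain P r s = g"
proof -
  have "cesaro P r s \<longlonglongrightarrow> g"
    using cesaro_tendsto_stat_dist[OF P] poisson_gain_eq_stat_mean[OF P poisson] by simp
  then show ?thesis unfolding gain_def cesaro_def[symmetric] by (rule limI)
qed

lemma bias_eq_poisson:
  fixes P :: "'s::finite \<Rightarrow> 's \<Rightarrow> real"
  assumes P: "stochastic P" "unichain_chain P" and poisson: "\<And>s. g + h s = r s + mv P h s"
  shows "bias P r s = h s - (\<Sum>t\<in>UNIV. stat_dist P t * h t)"
proof -
  have "(\<lambda>u. r u - gain P r u) = (\<lambda>u. h u - mv P h u)"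
    using poisson gain_eq_poisson[OF P poisson] by (auto simp: algebra_simps)
  then have "(\<Sum>n<N. \<Sum>k<n. mv (mat_pow P k) (\<lambda>u. r u - gain P r u) s) / real N = h s - cesaro P h s N"
    if "N > 0" for N
    using that by (simp add: sum_mv_mat_pow_telescope cesaro_def sum_subtractf field_simps)
  then have "\<forall>\<^sub>F N in sequentially. h s - cesaro P h s N
      = (\<Sum>n<N. \<Sum>k<n. mv (mat_pow P k) (\<lambda>u. r u - gain P r u) s) / real N"
    by (auto intro!: eventually_sequentiallyI[of 1])
  moreover have "(\<lambda>N. h s - cesaro P h s N) \<longlonglongrightarrow> h s - (\<Sum>t\<in>UNIV. stat_dist P t * h t)"
    by (intro tendsto_intros cesaro_tendsto_stat_dist[OF P])
  ultimately show ?thesis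
    unfolding bias_def by (intro limI) (rule Lim_transform_eventually[rotated])
qed


section \<open>Hitting times and the span of a Poisson solution\<close>

text \<open>\<open>survival P s' n x\<close> is the probability, starting from \<open>x\<close>, of not visiting \<open>s'\<close> at times
  \<open>1, \<dots>, n\<close>.\<close>

definition survival :: "('s::finite \<Rightarrow> 's \<Rightarrow> real) \<Rightarrow> 's \<Rightarrow> nat \<Rightarrow> 's \<Rightarrow> real" where
  "survival P s' n x = (\<Sum>t\<in>UNIV. mat_pow (taboo P s') n x t)"

lemma taboo_nonneg: "stochastic P \<Longrightarrow> 0 \<le> taboo P s' s t"
  unfolding taboo_def using stochastic_nonneg by auto

lemma taboo_row_sum: "stochastic P \<Longrightarrow> (\<Sum>t\<in>UNIV. taboo P s' s t) = 1 - P s s'"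
proof -
  assume P: "stochastic P"
  have "(\<Sum>t\<in>UNIV. taboo P s' s t) = (\<Sum>t\<in>UNIV. P s t - (if t = s' then P s t else 0))"
    unfolding taboo_def by (rule sum.cong) auto
  also have "\<dots> = 1 - P s s'" using P unfolding stochastic_def by (simp add: sum_subtractf)
  finally show ?thesis .
qed

lemma survival_0 [simp]: "survival P s' 0 x = 1"
  unfolding survival_def by simp

lemma survival_Suc: "survival P s' (Suc n) x = (\<Sum>u\<in>UNIV. taboo P s' x u * survival P s' n u)"
  unfolding survival_def by (simp add: sum_distrib_left) (rule sum.swap)

lemma survival_add:
  "survival P s' (m + n) x = (\<Sum>u\<in>UNIV. mat_pow (taboo P s') m x u * survival P s' n u)"
  unfolding survival_def mat_pow_add by (simp add: sum_distrib_left) (rule sum.swap)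

lemma survival_nonneg: "stochastic P \<Longrightarrow> 0 \<le> survival P s' n x"
  unfolding survival_def by (intro sum_nonneg mat_pow_nonneg taboo_nonneg)

lemma survival_Suc_le: "stochastic P \<Longrightarrow> survival P s' (Suc n) x \<le> survival P s' n x"
proof (induction n arbitrary: x)
  case 0
  have "survival P s' (Suc 0) x = 1 - P x s'"
    by (simp add: survival_Suc taboo_row_sum[OF "0.prems"])
  then show ?case using stochastic_nonneg[OF "0.prems"] by simp
next
  case (Suc n)
  have "survival P s' (Suc (Suc n)) x \<le> (\<Sum>u\<in>UNIV. taboo P s' x u * survival P s' n u)"
    unfolding survival_Suc[of P s' "Suc n"] by (intro sum_mono mult_left_mono Suc.IH Suc.prems taboo_nonneg)
  then show ?case by (simp add: survival_Suc)
qed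

lemma survival_antimono:
  assumes "stochastic P" "m \<le> n"
  shows "survival P s' n x \<le> survival P s' m x"
proof -
  have "decseq (\<lambda>n. survival P s' n x)" by (rule decseq_SucI) (rule survival_Suc_le[OF assms(1)])
  then show ?thesis using assms(2) by (simp add: decseq_def)
qed

lemma survival_le_1: "stochastic P \<Longrightarrow> survival P s' n x \<le> 1"
  using survival_antimono[of P 0 n] by simp

lemma survival_lt_1_if_trancl:
  fixes P :: "'s::finite \<Rightarrow> 's \<Rightarrow> real"
  assumes P: "stochastic P" and path: "(x, s') \<in> {(a, b). 0 < P a b}\<^sup>+"
  shows "\<exists>n. survival P s' n x < 1"
  using path
proof (induction rule: converse_trancl_induct)
  case (base y)
  have "survival P s' (Suc 0) y = 1 - P y s'"
    by (simp add: survival_Suc taboo_row_sum[OF P])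
  then show ?case using base by (intro exI[of _ "Suc 0"]) auto
next
  case (step y z)
  show ?case
  proof (cases "z = s'")
    case True
    have "survival P s' (Suc 0) y = 1 - P y s'"
      by (simp add: survival_Suc taboo_row_sum[OF P])
    then show ?thesis using step True by (intro exI[of _ "Suc 0"]) auto
  next
    case False
    obtain n where n: "survival P s' n z < 1" using step by blast
    have tz: "0 < taboo P s' y z" using step False unfolding taboo_def by auto
    have "taboo P s' y z * (1 - survival P s' n z) \<le> (\<Sum>u\<in>UNIV. taboo P s' y u * (1 - survival P s' n u))"
      by (rule member_le_sum) (auto intro!: mult_nonneg_nonneg taboo_nonneg[OF P] simp: survival_le_1[OF P])
    also have "\<dots> = (\<Sum>u\<in>UNIV. taboo P s' y u) - survival P s' (Suc n) y"
      by (simp add: survival_Suc algebra_simps sum_subtractf)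
    also have "\<dots> \<le> 1 - survival P s' (Suc n) y"
      using taboo_row_sum[OF P] stochastic_nonneg[OF P] by simp
    finally have "survival P s' (Suc n) y < 1"
      using tz n by (smt (verit) mult_pos_pos)
    then show ?thesis by blast
  qed
qed

lemma unichain_trancl_recurrent:
  fixes P :: "'s::finite \<Rightarrow> 's \<Rightarrow> real"
  assumes P: "stochastic P" "unichain_chain P" and rec: "recurrent P s'"
  shows "(x, s') \<in> {(a, b). 0 < P a b}\<^sup>+"
proof (cases "x = s'")
  case False
  have "(x, s') \<in> {(a, b). 0 < P a b}\<^sup>*"
    using unichain_reach_recurrent[OF P(2) rec] unfolding reach_def .
  then show ?thesis using False by (simp add: rtrancl_eq_or_trancl)
next
  case True
  obtain t where t: "0 < P s' t" using stochastic_ex_pos[OF P(1)] by blast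
  have "(t, s') \<in> reach P" using rec t unfolding recurrent_def reach_def by blast
  then have "(s', s') \<in> {(a, b). 0 < P a b}\<^sup>+"
    unfolding reach_def using t by (intro rtrancl_into_trancl2) auto
  then show ?thesis using True by simp
qed

lemma summable_power_div:
  fixes \<rho> :: real
  assumes "0 < \<rho>" "\<rho> < 1" "0 < N"
  shows "summable (\<lambda>n. \<rho> ^ (n div N))"
proof -
  define \<theta> where "\<theta> = root N \<rho>"
  have \<theta>: "\<theta> ^ N = \<rho>" "0 < \<theta>" "\<theta> < 1"
    using assms by (simp_all add: \<theta>_def real_root_gt_zero)
  have "norm (\<rho> ^ (n div N)) \<le> \<theta> ^ n / \<rho>" if "N \<le> n" for n
  proof -
    have "n = N * (n div N) + n mod N" "n mod N < N" using assms(3) by simp_all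
    then have "n - N \<le> N * (n div N)" by linarith
    then have "\<theta> ^ (N * (n div N)) \<le> \<theta> ^ (n - N)"
      by (rule power_decreasing) (use \<theta> in auto)
    also have "\<dots> = \<theta> ^ n / \<rho>"
      using \<theta> that by (simp add: power_diff)
    finally show ?thesis using assms(1) by (simp add: \<theta>(1)[symmetric] power_mult)
  qed
  moreover have "summable (\<lambda>n. \<theta> ^ n / \<rho>)"
    using \<theta> by (intro summable_divide summable_geometric) auto
  ultimately show ?thesis
    by (rule summable_comparison_test'[rotated])
qed

text \<open>From every state \<open>s'\<close> is hit within \<open>N\<close> steps with probability at least \<open>1 - \<rho>\<close>, so the
  survival probabilities decay geometrically in blocks of length \<open>N\<close>.\<close>

lemma survival_summable:
  fixes P :: "'s::finite \<Rightarrow> 's \<Rightarrow> real"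
  assumes P: "stochastic P" "unichain_chain P" and rec: "recurrent P s'"
  shows "summable (\<lambda>n. survival P s' n x)"
proof -
  obtain nf where nf: "\<And>y. survival P s' (nf y) y < 1"
    using survival_lt_1_if_trancl[OF P(1) unichain_trancl_recurrent[OF P rec]] by metis
  define N where "N = Max (range nf)"
  have N: "survival P s' N y < 1" for y
    using survival_antimono[OF P(1), of "nf y" N s' y] nf[of y] unfolding N_def by simp
  define \<rho> where "\<rho> = max (1/2) (Max (range (survival P s' N)))"
  have "Max (range (survival P s' N)) \<in> range (survival P s' N)" by (rule Max_in) auto
  moreover have "survival P s' N y \<le> Max (range (survival P s' N))" for y by (rule Max_ge) auto
  ultimately have \<rho>: "0 < \<rho>" "\<rho> < 1" "\<And>y. survival P s' N y \<le> \<rho>"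
    unfolding \<rho>_def using N by (fastforce simp: le_max_iff_disj)+
  have "0 < N" using N[of x] by (cases N) auto
  have geometric: "survival P s' (k * N) y \<le> \<rho> ^ k" for k y
  proof (induction k arbitrary: y)
    case (Suc k)
    have "survival P s' (Suc k * N) y = (\<Sum>u\<in>UNIV. mat_pow (taboo P s') (k * N) y u * survival P s' N u)"
      by (simp add: survival_add[symmetric] add.commute)
    also have "\<dots> \<le> (\<Sum>u\<in>UNIV. mat_pow (taboo P s') (k * N) y u * \<rho>)"
      by (intro sum_mono mult_left_mono \<rho>(3) mat_pow_nonneg taboo_nonneg[OF P(1)])
    also have "\<dots> = \<rho> * survival P s' (k * N) y"
      unfolding survival_def by (simp add: sum_distrib_left ac_simps)
    also have "\<dots> \<le> \<rho> * \<rho> ^ k" using Suc.IH \<rho> by (intro mult_left_mono) auto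
    finally show ?case by simp
  qed simp
  have "norm (survival P s' n x) \<le> \<rho> ^ (n div N)" for n
  proof -
    have "survival P s' n x \<le> survival P s' (n div N * N) x"
      by (rule survival_antimono[OF P(1)]) simp
    then show ?thesis using geometric[of "n div N" x] survival_nonneg[OF P(1)] by simp
  qed
  then show ?thesis
    by (rule summable_comparison_test'[OF summable_power_div[OF \<rho>(1,2) \<open>0 < N\<close>]])
qed

lemma exp_hit_eq_suminf: "s \<noteq> s' \<Longrightarrow> exp_hit P s s' = (\<Sum>n. survival P s' n s)"
  unfolding exp_hit_def survival_def by simp

text \<open>With \<open>u = h - h(s')\<close>, the Poisson equation reads \<open>u = (r - g) + Q u\<close> for the taboo matrix \<open>Q\<close>
  (as \<open>u(s') = 0\<close>); iterating it, \<open>|u(x)|\<close> is bounded by the expected number of steps before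
  \<open>s'\<close> is hit.\<close>

lemma poisson_diff_le_exp_hit:
  fixes P :: "'s::finite \<Rightarrow> 's \<Rightarrow> real"
  assumes P: "stochastic P" "unichain_chain P" and rec: "recurrent P s'"
    and poisson: "\<And>x. g + h x = r x + mv P h x" and bounded: "\<And>x. \<bar>r x - g\<bar> \<le> 1"
  shows "\<bar>h x - h s'\<bar> \<le> exp_hit P x s'"
proof (cases "x = s'")
  case True
  then show ?thesis unfolding exp_hit_def by simp
next
  case False
  define u where "u y = h y - h s'" for y
  define f where "f y = r y - g" for y
  define Q where "Q = taboo P s'"
  have Q_nonneg: "0 \<le> Q a b" for a b unfolding Q_def by (rule taboo_nonneg[OF P(1)])
  have u_eq: "u y = f y + mv Q u y" for y
  proof -
    have "mv Q u y = mv P u y"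
      unfolding mv_def Q_def taboo_def by (rule sum.cong) (auto simp: u_def)
    also have "\<dots> = mv P h y - h s'"
      unfolding u_def by (simp add: mv_diff mv_const[OF P(1)])
    finally show ?thesis using poisson[of y] unfolding u_def f_def by simp
  qed
  have iterate: "u y = (\<Sum>k<n. mv (mat_pow Q k) f y) + mv (mat_pow Q n) u y" for n y
  proof (induction n arbitrary: y)
    case (Suc n)
    have "u = (\<lambda>z. (\<Sum>k<n. mv (mat_pow Q k) f z) + mv (mat_pow Q n) u z)"
      by (rule ext) (rule Suc.IH)
    then have "u y = f y + mv Q (\<lambda>z. (\<Sum>k<n. mv (mat_pow Q k) f z) + mv (mat_pow Q n) u z) y"
      using u_eq[of y] arg_cong[where f = "\<lambda>w. mv Q w y"] by presburger
    also have "\<dots> = f y + (\<Sum>k<n. mv (mat_pow Q (Suc k)) f y) + mv (mat_pow Q (Suc n)) u y"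
      by (simp only: mv_add mv_sum mv_mat_pow_Suc)
    also have "\<dots> = (\<Sum>k<Suc n. mv (mat_pow Q k) f y) + mv (mat_pow Q (Suc n)) u y"
      by (simp only: sum.lessThan_Suc_shift mat_pow.simps(1) mv_id)
    finally show ?case .
  qed simp
  define B where "B = Max (range (\<lambda>t. \<bar>u t\<bar>))"
  have B: "\<bar>u t\<bar> \<le> B" for t unfolding B_def by simp
  have summable: "summable (\<lambda>n. survival P s' n x)" by (rule survival_summable[OF P rec])
  have "\<bar>u x\<bar> \<le> (\<Sum>n. survival P s' n x) + B * survival P s' n x" for n
  proof -
    have "\<bar>u x\<bar> \<le> (\<Sum>k<n. \<bar>mv (mat_pow Q k) f x\<bar>) + \<bar>mv (mat_pow Q n) u x\<bar>"
      using iterate[of x n] abs_triangle_ineq[of "\<Sum>k<n. mv (mat_pow Q k) f x" "mv (mat_pow Q n) u x"]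
        sum_abs[of "\<lambda>k. mv (mat_pow Q k) f x" "{..<n}"]
      by linarith
    also have "\<dots> \<le> (\<Sum>k<n. 1 * survival P s' k x) + B * survival P s' n x"
      unfolding survival_def Q_def[symmetric]
      by (intro add_mono sum_mono abs_mv_le_row_sum mat_pow_nonneg Q_nonneg B) (simp_all add: f_def bounded)
    also have "(\<Sum>k<n. 1 * survival P s' k x) \<le> (\<Sum>n. survival P s' n x)"
      using sum_le_suminf[OF summable, of "{..<n}"] survival_nonneg[OF P(1)] by simp
    finally show ?thesis by simp
  qed
  moreover have "(\<lambda>n. (\<Sum>n. survival P s' n x) + B * survival P s' n x) \<longlonglongrightarrow> (\<Sum>n. survival P s' n x) + B * 0"
    by (intro tendsto_intros summable_LIMSEQ_zero[OF summable])
  ultimately have "\<bar>u x\<bar> \<le> (\<Sum>n. survival P s' n x) + B * 0"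
    using LIMSEQ_le_const by blast
  then show ?thesis unfolding u_def exp_hit_eq_suminf[OF False] by simp
qed

lemma exp_hit_le_diameter:
  fixes P :: "'s::finite \<Rightarrow> 's \<Rightarrow> real"
  assumes "recurrent P s'"
  shows "exp_hit P x s' \<le> diameter P"
proof -
  have "{exp_hit P s s' | s s'. recurrent P s'} \<subseteq> range (\<lambda>(s, s'). exp_hit P s s')" by auto
  then have "finite {exp_hit P s s' | s s'. recurrent P s'}" by (rule finite_subset) simp
  then show ?thesis unfolding diameter_def by (rule Max_ge) (use assms in blast)
qed

lemma diameter_nonneg:
  fixes P :: "'s::finite \<Rightarrow> 's \<Rightarrow> real"
  shows "0 \<le> diameter P"
proof -
  obtain s' where "recurrent P s'" using exists_recurrent by blast
  from exp_hit_le_diameter[OF this, of s'] show ?thesis unfolding exp_hit_def by simp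
qed

lemma poisson_span_le_diameter:
  fixes P :: "'s::finite \<Rightarrow> 's \<Rightarrow> real"
  assumes P: "stochastic P" "unichain_chain P"
    and poisson: "\<And>x. g + h x = r x + mv P h x" and bounded: "\<And>x. \<bar>r x - g\<bar> \<le> 1"
  shows "\<bar>h x - h y\<bar> \<le> 2 * diameter P"
proof -
  obtain s' where rec: "recurrent P s'" using exists_recurrent by blast
  have "\<bar>h z - h s'\<bar> \<le> diameter P" for z
    using poisson_diff_le_exp_hit[OF P rec poisson bounded, of z] exp_hit_le_diameter[OF rec, of z] by linarith
  from this[of x] this[of y] show ?thesis by linarith
qed


section \<open>Policies of a unichain MDP\<close>

locale unichain_mdp =
  fixes P0 P1 :: "'s::finite \<Rightarrow> 's \<Rightarrow> real" and r0 r1 :: "'s \<Rightarrow> real"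
  assumes stochastic_P0: "stochastic P0" and stochastic_P1: "stochastic P1"
    and unichain: "unichain P0 P1"
begin

abbreviation Ppol :: "'s set \<Rightarrow> 's \<Rightarrow> 's \<Rightarrow> real" where
  "Ppol \<pi> \<equiv> pol_P P0 P1 \<pi>"

abbreviation rpol :: "real \<Rightarrow> 's set \<Rightarrow> 's \<Rightarrow> real" where
  "rpol l \<pi> \<equiv> pol_r r0 r1 l \<pi>"

abbreviation backup :: "real \<Rightarrow> 's set \<Rightarrow> ('s \<Rightarrow> real) \<Rightarrow> 's \<Rightarrow> real" where
  "backup l \<pi> h s \<equiv> rpol l \<pi> s + mv (Ppol \<pi>) h s"

abbreviation stat :: "'s set \<Rightarrow> 's \<Rightarrow> real" where
  "stat \<pi> \<equiv> stat_dist (Ppol \<pi>)"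

abbreviation bias_pol :: "real \<Rightarrow> 's set \<Rightarrow> 's \<Rightarrow> real" where
  "bias_pol l \<pi> \<equiv> pbias P0 P1 r0 r1 l \<pi>"

abbreviation adv_pol :: "real \<Rightarrow> 's set \<Rightarrow> 's \<Rightarrow> real" where
  "adv_pol l \<pi> \<equiv> adv P0 P1 r0 r1 l \<pi>"

definition gain_pol :: "real \<Rightarrow> 's set \<Rightarrow> real" where
  "gain_pol l \<pi> = (\<Sum>t\<in>UNIV. stat \<pi> t * rpol l \<pi> t)"

lemma stochastic_Ppol: "stochastic (Ppol \<pi>)"
proof -
  have "(\<Sum>t\<in>UNIV. Ppol \<pi> s t) = 1" for s
    by (cases "s \<in> \<pi>") (use stochastic_P0 stochastic_P1 in \<open>auto simp: pol_P_def stochastic_def\<close>)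
  then show ?thesis
    using stochastic_P0 stochastic_P1 unfolding stochastic_def pol_P_def by auto
qed

lemma unichain_Ppol: "unichain_chain (Ppol \<pi>)"
  using unichain unfolding unichain_def by blast

lemmas Ppol = stochastic_Ppol unichain_Ppol

lemma stat_nonneg: "0 \<le> stat \<pi> t"
  by (rule stat_dist_nonneg[OF Ppol])

lemma Ppol_eq: "(t \<in> \<pi> \<longleftrightarrow> t \<in> \<pi>') \<Longrightarrow> Ppol \<pi> t = Ppol \<pi>' t"
  unfolding pol_P_def by auto

lemma backup_eq:
  "backup l \<pi> h s = (if s \<in> \<pi> then r1 s - l + mv P1 h s else r0 s + mv P0 h s)"
  unfolding pol_r_def pol_P_def mv_def by auto

lemma backup_eq_if_same_action: "(s \<in> \<pi> \<longleftrightarrow> s \<in> \<pi>') \<Longrightarrow> backup l \<pi> h s = backup l \<pi>' h s"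
  unfolding backup_eq by simp

lemma adv_pol_eq:
  "adv_pol l \<pi> s = (r1 s - l + mv P1 (bias_pol l \<pi>) s) - (r0 s + mv P0 (bias_pol l \<pi>) s)"
  unfolding adv_def mv_def by (simp add: left_diff_distrib sum_subtractf)

lemma poisson_pol_eq:
  assumes "\<And>s. g + h s = backup l \<pi> h s"
  shows "gain_pol l \<pi> = g" "bias_pol l \<pi> s = h s - (\<Sum>t\<in>UNIV. stat \<pi> t * h t)"
  using poisson_gain_eq_stat_mean[OF Ppol assms] bias_eq_poisson[OF Ppol assms]
  unfolding gain_pol_def pbias_def by auto

lemma pgain_eq: "pgain P0 P1 r0 r1 l \<pi> s = gain_pol l \<pi>"
proof -
  obtain g h where "\<And>s. g + h s = backup l \<pi> h s" using poisson_solvable[OF Ppol] by blast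
  then show ?thesis unfolding pgain_def using gain_eq_poisson[OF Ppol] poisson_pol_eq(1) by metis
qed

lemma poisson_bias_pol: "gain_pol l \<pi> + bias_pol l \<pi> s = backup l \<pi> (bias_pol l \<pi>) s"
  and stat_mean_bias_pol: "(\<Sum>t\<in>UNIV. stat \<pi> t * bias_pol l \<pi> t) = 0"
proof -
  obtain g h where poisson: "\<And>s. g + h s = backup l \<pi> h s" using poisson_solvable[OF Ppol] by blast
  define c where "c = (\<Sum>t\<in>UNIV. stat \<pi> t * h t)"
  have bias: "bias_pol l \<pi> = (\<lambda>s. h s - c)" using poisson_pol_eq(2)[OF poisson] unfolding c_def by auto
  have "mv (Ppol \<pi>) (\<lambda>s. h s - c) s = mv (Ppol \<pi>) h s - c" by (simp add: mv_diff mv_const[OF stochastic_Ppol])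
  then show "gain_pol l \<pi> + bias_pol l \<pi> s = backup l \<pi> (bias_pol l \<pi>) s"
    unfolding bias using poisson[of s] poisson_pol_eq(1)[OF poisson] by simp
  show "(\<Sum>t\<in>UNIV. stat \<pi> t * bias_pol l \<pi> t) = 0"
    unfolding bias c_def
    by (simp add: right_diff_distrib sum_subtractf sum_distrib_right[symmetric] stat_dist_sum[OF Ppol])
qed


lemma gain_pol_defect:
  "gain_pol l \<pi> = g - (\<Sum>t\<in>UNIV. stat \<pi> t * (g + h t - backup l \<pi> h t))"
proof -
  have "(\<Sum>t\<in>UNIV. stat \<pi> t * (g + h t - backup l \<pi> h t)) = g * (\<Sum>t\<in>UNIV. stat \<pi> t)
      + (\<Sum>t\<in>UNIV. stat \<pi> t * h t) - gain_pol l \<pi> - (\<Sum>t\<in>UNIV. stat \<pi> t * mv (Ppol \<pi>) h t)"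
    unfolding gain_pol_def by (simp add: algebra_simps sum.distrib sum_subtractf sum_distrib_left)
  then show ?thesis using stat_dist_stationary[OF Ppol, of \<pi> h] stat_dist_sum[OF Ppol, of \<pi>] by simp
qed

lemma defect_vanishes_on_stat_support:
  assumes gain: "gain_pol l \<pi> = g" and super: "\<And>u. backup l \<pi> h u \<le> g + h u"
    and "0 < stat \<pi> u"
  shows "backup l \<pi> h u = g + h u"
proof -
  have "(\<Sum>t\<in>UNIV. stat \<pi> t * (g + h t - backup l \<pi> h t)) = 0"
    using gain_pol_defect[of l \<pi> g h] gain by simp
  moreover have "0 \<le> stat \<pi> t * (g + h t - backup l \<pi> h t)" for t
    using super[of t] stat_nonneg[of \<pi> t] by simp
  ultimately have "stat \<pi> u * (g + h u - backup l \<pi> h u) = 0"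
    using sum_nonneg_eq_0_iff[of UNIV "\<lambda>t. stat \<pi> t * (g + h t - backup l \<pi> h t)"] by simp
  then show ?thesis using assms(3) by simp
qed

lemma bias_pol_le_of_supersolution:
  assumes gain: "gain_pol l \<pi> = g" and super: "\<And>u. backup l \<pi> h u \<le> g + h u"
  shows "bias_pol l \<pi> t \<le> h t - (\<Sum>u\<in>UNIV. stat \<pi> u * h u)"
proof -
  define v where "v u = h u - bias_pol l \<pi> u" for u
  have "v u = (g + h u - backup l \<pi> h u) + mv (Ppol \<pi>) v u" for u
    using poisson_bias_pol[of l \<pi> u] gain unfolding v_def mv_diff by simp
  moreover have "0 \<le> g + h u - backup l \<pi> h u" for u using super[of u] by simp
  ultimately have "(\<Sum>u\<in>UNIV. stat \<pi> u * v u) + (g + h t - backup l \<pi> h t) \<le> v t"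
    by (rule stat_mean_plus_defect_le[OF Ppol])
  then have "(\<Sum>u\<in>UNIV. stat \<pi> u * v u) \<le> v t" using super[of t] by linarith
  moreover have "(\<Sum>u\<in>UNIV. stat \<pi> u * v u) = (\<Sum>u\<in>UNIV. stat \<pi> u * h u)"
    using stat_mean_bias_pol[of \<pi> l] unfolding v_def by (simp add: right_diff_distrib sum_subtractf)
  ultimately show ?thesis unfolding v_def by simp
qed

lemma bias_pol_ge_of_subsolution:
  assumes gain: "gain_pol l \<pi> = g" and sub: "\<And>u. g + h u \<le> backup l \<pi> h u"
  shows "h t - (\<Sum>u\<in>UNIV. stat \<pi> u * h u) + (backup l \<pi> h t - g - h t) \<le> bias_pol l \<pi> t"
proof -
  define v where "v u = bias_pol l \<pi> u - h u" for u
  have "v u = (backup l \<pi> h u - g - h u) + mv (Ppol \<pi>) v u" for u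
    using poisson_bias_pol[of l \<pi> u] gain unfolding v_def mv_diff by simp
  moreover have "0 \<le> backup l \<pi> h u - g - h u" for u using sub[of u] by simp
  ultimately have "(\<Sum>u\<in>UNIV. stat \<pi> u * v u) + (backup l \<pi> h t - g - h t) \<le> v t"
    by (rule stat_mean_plus_defect_le[OF Ppol])
  moreover have "(\<Sum>u\<in>UNIV. stat \<pi> u * v u) = - (\<Sum>u\<in>UNIV. stat \<pi> u * h u)"
    using stat_mean_bias_pol[of \<pi> l] unfolding v_def by (simp add: right_diff_distrib sum_subtractf)
  ultimately show ?thesis unfolding v_def by simp
qed

lemma stat_eq_if_same_on_support:
  assumes same: "\<And>t. 0 < stat \<pi> t \<Longrightarrow> (t \<in> \<pi> \<longleftrightarrow> t \<in> \<pi>')"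
  shows "stat \<pi>' = stat \<pi>"
proof -
  have "(\<Sum>t\<in>UNIV. stat \<pi> t * Ppol \<pi>' t u) = stat \<pi> u" for u
  proof -
    have "stat \<pi> t * Ppol \<pi>' t u = stat \<pi> t * Ppol \<pi> t u" for t
      using same[of t] Ppol_eq[of t \<pi> \<pi>'] stat_nonneg[of \<pi> t] by (cases "0 < stat \<pi> t") auto
    then have "(\<Sum>t\<in>UNIV. stat \<pi> t * Ppol \<pi>' t u) = (\<Sum>t\<in>UNIV. stat \<pi> t * Ppol \<pi> t u)"
      by (rule sum.cong[OF refl])
    also have "\<dots> = (\<Sum>t\<in>UNIV. stat \<pi> t * mv (Ppol \<pi>) (\<lambda>v. if v = u then 1 else 0) t)"
      by (simp add: mv_indicator)
    also have "\<dots> = stat \<pi> u"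
      by (simp add: stat_dist_stationary[OF Ppol] if_distrib cong: if_cong)
    finally show ?thesis .
  qed
  then show ?thesis using stat_dist_unique[OF Ppol stat_dist_sum[OF Ppol]] by metis
qed

text \<open>Closed sets of two different policies meet: otherwise the policy acting like the first on
  the first set and like the second elsewhere would have two disjoint closed sets.\<close>

lemma closed_sets_of_policies_meet:
  assumes closed: "closed_set (Ppol \<pi>) C" "closed_set (Ppol \<pi>') C'" and "C \<noteq> {}" "C' \<noteq> {}"
  shows "C \<inter> C' \<noteq> {}"
proof
  assume disjoint: "C \<inter> C' = {}"
  define \<sigma> where "\<sigma> = (\<pi> \<inter> C) \<union> (\<pi>' - C)"
  have "closed_set (Ppol \<sigma>) C"
    unfolding closed_set_def
  proof (intro allI impI)
    fix s t assume "s \<in> C" "0 < Ppol \<sigma> s t"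
    moreover have "s \<in> \<sigma> \<longleftrightarrow> s \<in> \<pi>" using \<open>s \<in> C\<close> unfolding \<sigma>_def by auto
    ultimately show "t \<in> C" using closed(1) Ppol_eq[of s \<sigma> \<pi>] unfolding closed_set_def by auto
  qed
  moreover have "closed_set (Ppol \<sigma>) C'"
    unfolding closed_set_def
  proof (intro allI impI)
    fix s t assume "s \<in> C'" "0 < Ppol \<sigma> s t"
    moreover have "s \<in> \<sigma> \<longleftrightarrow> s \<in> \<pi>'" using \<open>s \<in> C'\<close> disjoint unfolding \<sigma>_def by auto
    ultimately show "t \<in> C'" using closed(2) Ppol_eq[of s \<sigma> \<pi>'] unfolding closed_set_def by auto
  qed
  ultimately show False
    using unichain_closed_sets_meet[OF unichain_Ppol] assms(3,4) disjoint by blast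
qed

end


section \<open>Bias optimal policies\<close>

context unichain_mdp
begin

definition adv_consistent :: "real \<Rightarrow> 's set \<Rightarrow> bool" where
  "adv_consistent l \<pi> \<longleftrightarrow> (\<forall>s. (s \<in> \<pi> \<longrightarrow> 0 \<le> adv_pol l \<pi> s) \<and> (s \<notin> \<pi> \<longrightarrow> adv_pol l \<pi> s \<le> 0))"

lemma adv_consistent_backup_le:
  assumes "adv_consistent l \<pi>"
  shows "backup l \<pi>' (bias_pol l \<pi>) s \<le> gain_pol l \<pi> + bias_pol l \<pi> s"
  using assms poisson_bias_pol[of l \<pi> s]
  unfolding adv_consistent_def adv_pol_eq backup_eq by (auto split: if_splits)

lemma adv_consistent_gain_max:
  assumes "adv_consistent l \<pi>"
  shows "gain_pol l \<pi>' \<le> gain_pol l \<pi>"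
proof -
  have "0 \<le> (\<Sum>t\<in>UNIV. stat \<pi>' t * (gain_pol l \<pi> + bias_pol l \<pi> t - backup l \<pi>' (bias_pol l \<pi>) t))"
    using adv_consistent_backup_le[OF assms] stat_nonneg by (intro sum_nonneg mult_nonneg_nonneg) auto
  then show ?thesis using gain_pol_defect[of l \<pi>' "gain_pol l \<pi>" "bias_pol l \<pi>"] by linarith
qed

definition toggle :: "'s \<Rightarrow> 's set \<Rightarrow> 's set" where
  "toggle s \<pi> = (if s \<in> \<pi> then \<pi> - {s} else insert s \<pi>)"

text \<open>The switch cannot raise the gain, so the switched state is transient for the new policy,
  whose stationary distribution is therefore that of \<open>\<pi>\<close>.\<close>

lemma toggle_improves:
  assumes opt: "\<And>\<pi>'. gain_pol l \<pi>' \<le> gain_pol l \<pi>"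
    and wrong_sign: "(s \<in> \<pi> \<and> adv_pol l \<pi> s < 0) \<or> (s \<notin> \<pi> \<and> 0 < adv_pol l \<pi> s)"
  shows "gain_pol l (toggle s \<pi>) = gain_pol l \<pi>"
    and "\<And>t. bias_pol l \<pi> t \<le> bias_pol l (toggle s \<pi>) t"
    and "bias_pol l \<pi> s < bias_pol l (toggle s \<pi>) s"
proof -
  define \<pi>' where "\<pi>' = toggle s \<pi>"
  define g where "g = gain_pol l \<pi>"
  define h where "h = bias_pol l \<pi>"
  define d where "d t = backup l \<pi>' h t - g - h t" for t
  have same: "t \<noteq> s \<Longrightarrow> t \<in> \<pi>' \<longleftrightarrow> t \<in> \<pi>" for t unfolding \<pi>'_def toggle_def by auto
  have d_other: "d t = 0" if "t \<noteq> s" for t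
    using backup_eq_if_same_action[OF same[OF that], of l h] poisson_bias_pol[of l \<pi> t]
    unfolding d_def g_def h_def by simp
  have "s \<in> \<pi>' \<longleftrightarrow> s \<notin> \<pi>" unfolding \<pi>'_def toggle_def by auto
  then have d_pos: "0 < d s"
    using wrong_sign poisson_bias_pol[of l \<pi> s]
    unfolding d_def g_def h_def adv_pol_eq backup_eq by (auto split: if_splits)
  have d_nonneg: "0 \<le> d t" for t using d_other d_pos by (cases "t = s") auto
  have "g + h t - backup l \<pi>' h t = - d t" for t by (simp add: d_def)
  then have "stat \<pi>' t * (g + h t - backup l \<pi>' h t) = (if t = s then - stat \<pi>' s * d s else 0)" for t
    using d_other[of t] by (cases "t = s") simp_all
  then have "(\<Sum>t\<in>UNIV. stat \<pi>' t * (g + h t - backup l \<pi>' h t)) = - stat \<pi>' s * d s"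
    by simp
  then have "gain_pol l \<pi>' = g + stat \<pi>' s * d s"
    using gain_pol_defect[of l \<pi>' g h] by simp
  moreover have "gain_pol l \<pi>' \<le> g" using opt unfolding g_def by blast
  ultimately have "stat \<pi>' s = 0" and gain: "gain_pol l \<pi>' = g"
    using d_pos stat_nonneg[of \<pi>' s] by (auto simp: mult_le_0_iff)
  then have "t \<in> \<pi>' \<longleftrightarrow> t \<in> \<pi>" if "0 < stat \<pi>' t" for t
    using same[of t] that by (cases "t = s") auto
  then have "stat \<pi> = stat \<pi>'" by (rule stat_eq_if_same_on_support)
  then have "(\<Sum>u\<in>UNIV. stat \<pi>' u * h u) = 0" using stat_mean_bias_pol[of \<pi> l] unfolding h_def by simp
  moreover have sub: "g + h u \<le> backup l \<pi>' h u" for u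
    using d_nonneg[of u] unfolding d_def by simp
  ultimately have improved: "h t + d t \<le> bias_pol l \<pi>' t" for t
    using bias_pol_ge_of_subsolution[OF gain sub, of t] unfolding d_def by simp
  show "gain_pol l (toggle s \<pi>) = gain_pol l \<pi>"
    using gain unfolding \<pi>'_def g_def .
  show "bias_pol l \<pi> t \<le> bias_pol l (toggle s \<pi>) t" for t
    using improved[of t] d_nonneg[of t] unfolding \<pi>'_def h_def by linarith
  show "bias_pol l \<pi> s < bias_pol l (toggle s \<pi>) s"
    using improved[of s] d_pos unfolding \<pi>'_def h_def by linarith
qed

lemma wrong_sign_if_not_adv_consistent:
  "\<not> adv_consistent l \<pi> \<Longrightarrow> \<exists>s. (s \<in> \<pi> \<and> adv_pol l \<pi> s < 0) \<or> (s \<notin> \<pi> \<and> 0 < adv_pol l \<pi> s)"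
  unfolding adv_consistent_def by (auto simp: not_le)

text \<open>A gain optimal policy maximising the total bias admits no improving switch.\<close>

lemma adv_consistent_exists: "\<exists>\<pi>. adv_consistent l \<pi>"
proof -
  define g where "g = Max (range (gain_pol l))"
  have g: "gain_pol l \<pi> \<le> g" for \<pi> unfolding g_def by simp
  have "g \<in> range (gain_pol l)" unfolding g_def by (rule Max_in) auto
  then have nonempty: "{\<pi>. gain_pol l \<pi> = g} \<noteq> {}" by auto
  define total where "total \<pi> = (\<Sum>t\<in>UNIV. bias_pol l \<pi> t)" for \<pi>
  have "Max (total ` {\<pi>. gain_pol l \<pi> = g}) \<in> total ` {\<pi>. gain_pol l \<pi> = g}"
    using nonempty by (intro Max_in) auto
  then obtain \<pi> where \<pi>: "gain_pol l \<pi> = g" and "total \<pi> = Max (total ` {\<pi>. gain_pol l \<pi> = g})"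
    by auto
  then have max: "total \<pi>' \<le> total \<pi>" if "gain_pol l \<pi>' = g" for \<pi>'
    using that by (simp add: Max_ge)
  show ?thesis
  proof (rule ccontr)
    assume "\<nexists>\<pi>. adv_consistent l \<pi>"
    then obtain s where wrong_sign: "(s \<in> \<pi> \<and> adv_pol l \<pi> s < 0) \<or> (s \<notin> \<pi> \<and> 0 < adv_pol l \<pi> s)"
      using wrong_sign_if_not_adv_consistent by blast
    note toggle = toggle_improves[OF g[unfolded \<pi>[symmetric]] wrong_sign]
    have "total \<pi> < total (toggle s \<pi>)"
      unfolding total_def by (rule sum_strict_mono_ex1) (use toggle(2,3) in auto)
    moreover have "total (toggle s \<pi>) \<le> total \<pi>" using max toggle(1) \<pi> by simp
    ultimately show False by simp
  qed
qed

lemma gain_opt_iff: "gain_opt P0 P1 r0 r1 l \<pi> \<longleftrightarrow> (\<forall>\<pi>'. gain_pol l \<pi>' \<le> gain_pol l \<pi>)"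
  unfolding gain_opt_def pgain_eq by simp

lemma bias_opt_imp_adv_consistent:
  assumes "bias_opt P0 P1 r0 r1 l \<pi>"
  shows "adv_consistent l \<pi>"
proof (rule ccontr)
  assume "\<not> adv_consistent l \<pi>"
  then obtain s where wrong_sign: "(s \<in> \<pi> \<and> adv_pol l \<pi> s < 0) \<or> (s \<notin> \<pi> \<and> 0 < adv_pol l \<pi> s)"
    using wrong_sign_if_not_adv_consistent by blast
  have opt: "gain_pol l \<pi>' \<le> gain_pol l \<pi>" for \<pi>'
    using assms unfolding bias_opt_def gain_opt_iff by blast
  note toggle = toggle_improves[OF opt wrong_sign]
  have "gain_opt P0 P1 r0 r1 l (toggle s \<pi>)" unfolding gain_opt_iff using toggle(1) opt by simp
  then have "bias_pol l (toggle s \<pi>) s \<le> bias_pol l \<pi> s" using assms unfolding bias_opt_def by blast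
  then show False using toggle(3) by simp
qed

text \<open>Two sign-consistent policies have biases differing by a function that is subharmonic for the
  one and superharmonic for the other; by the maximum principle it is constant, and constants do
  not change advantages.\<close>

lemma adv_consistent_adv_eq:
  assumes a: "adv_consistent l \<pi>" and b: "adv_consistent l \<pi>'"
  shows "adv_pol l \<pi> s = adv_pol l \<pi>' s"
proof -
  have gain: "gain_pol l \<pi> = gain_pol l \<pi>'"
    using adv_consistent_gain_max[OF a, of \<pi>'] adv_consistent_gain_max[OF b, of \<pi>] by simp
  define v where "v t = bias_pol l \<pi> t - bias_pol l \<pi>' t" for t
  have "mv (Ppol \<pi>') v t \<le> v t" for t
    using adv_consistent_backup_le[OF a, of \<pi>' t] poisson_bias_pol[of l \<pi>' t] gain
    unfolding v_def mv_diff by simp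
  then have "closed_set (Ppol \<pi>') {t. v t = Min (range v)}" by (rule closed_set_argmin[OF stochastic_Ppol])
  moreover have "v t \<le> mv (Ppol \<pi>) v t" for t
    using adv_consistent_backup_le[OF b, of \<pi> t] poisson_bias_pol[of l \<pi> t] gain
    unfolding v_def mv_diff by simp
  then have "closed_set (Ppol \<pi>) {t. v t = Max (range v)}" by (rule closed_set_argmax[OF stochastic_Ppol])
  ultimately have "{t. v t = Max (range v)} \<inter> {t. v t = Min (range v)} \<noteq> {}"
    by (intro closed_sets_of_policies_meet argmax_argmin_nonempty)
  then have const: "v t = v s" for t by (rule constant_if_argmax_meets_argmin)
  have "mv P v s = v s" if "stochastic P" for P
  proof (rule antisym)
    show "mv P v s \<le> v s" by (rule mv_le_const[OF that eq_refl[OF const]])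
    show "v s \<le> mv P v s" by (rule const_le_mv[OF that eq_refl[OF const[symmetric]]])
  qed
  moreover have "adv_pol l \<pi> s - adv_pol l \<pi>' s = mv P1 v s - mv P0 v s"
    unfolding adv_pol_eq v_def mv_diff by simp
  ultimately show ?thesis using stochastic_P0 stochastic_P1 by simp
qed

text \<open>Construction of a bias optimal policy from a sign-consistent policy \<open>\<pi>\<^sub>0\<close> with bias
  \<open>h\<^sub>0\<close>: every gain optimal \<open>\<pi>\<close> has bias at most \<open>h\<^sub>0 - \<mu>\<^sub>\<pi> h\<^sub>0\<close>.  Take a gain optimal
  \<open>\<pi>\<^sub>1\<close> minimising \<open>\<mu>\<^sub>\<pi> h\<^sub>0\<close>; the policy acting like \<open>\<pi>\<^sub>1\<close> on the support of
  \<open>\<mu>\<^sub>\<pi>\<^sub>1\<close> and like \<open>\<pi>\<^sub>0\<close> elsewhere attains the bound.\<close>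

lemma bias_opt_exists: "\<exists>\<pi>. bias_opt P0 P1 r0 r1 l \<pi>"
proof -
  obtain \<pi>0 where \<pi>0: "adv_consistent l \<pi>0" using adv_consistent_exists by blast
  define g where "g = gain_pol l \<pi>0"
  define h0 where "h0 = bias_pol l \<pi>0"
  define F where "F \<pi> = (\<Sum>u\<in>UNIV. stat \<pi> u * h0 u)" for \<pi>
  have gain_max: "gain_pol l \<pi> \<le> g" for \<pi> using adv_consistent_gain_max[OF \<pi>0] unfolding g_def .
  have super: "backup l \<pi> h0 u \<le> g + h0 u" for \<pi> u
    using adv_consistent_backup_le[OF \<pi>0] unfolding g_def h0_def .
  have bound: "bias_pol l \<pi> t \<le> h0 t - F \<pi>" if "gain_pol l \<pi> = g" for \<pi> t
    using bias_pol_le_of_supersolution[OF that super] unfolding F_def .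
  obtain \<pi>1 where \<pi>1: "gain_pol l \<pi>1 = g" and min: "\<And>\<pi>. gain_pol l \<pi> = g \<Longrightarrow> F \<pi>1 \<le> F \<pi>"
    using ex_is_arg_min_if_finite[of "{\<pi>. gain_pol l \<pi> = g}" F] g_def
    by (auto simp: is_arg_min_linorder)
  define \<pi>2 where "\<pi>2 = {u. (0 < stat \<pi>1 u \<and> u \<in> \<pi>1) \<or> (\<not> 0 < stat \<pi>1 u \<and> u \<in> \<pi>0)}"
  have "g + h0 u = backup l \<pi>2 h0 u" for u
  proof (cases "0 < stat \<pi>1 u")
    case True
    then have "backup l \<pi>2 h0 u = backup l \<pi>1 h0 u"
      by (intro backup_eq_if_same_action) (auto simp: \<pi>2_def)
    then show ?thesis using defect_vanishes_on_stat_support[OF \<pi>1 super True] by simp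
  next
    case False
    then have "backup l \<pi>2 h0 u = backup l \<pi>0 h0 u"
      by (intro backup_eq_if_same_action) (auto simp: \<pi>2_def)
    then show ?thesis using poisson_bias_pol[of l \<pi>0 u] unfolding g_def h0_def by simp
  qed
  note poisson = poisson_pol_eq[of g h0 l \<pi>2, OF this]
  have "stat \<pi>2 = stat \<pi>1"
    by (rule stat_eq_if_same_on_support) (auto simp: \<pi>2_def)
  then have \<pi>2: "gain_pol l \<pi>2 = g" "bias_pol l \<pi>2 t = h0 t - F \<pi>1" for t
    using poisson unfolding F_def by simp_all
  have "bias_opt P0 P1 r0 r1 l \<pi>2"
    unfolding bias_opt_def gain_opt_iff
  proof (intro conjI allI impI)
    show "gain_pol l \<pi>' \<le> gain_pol l \<pi>2" for \<pi>' using gain_max \<pi>2(1) by simp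
  next
    fix \<pi>' s assume "\<forall>\<pi>''. gain_pol l \<pi>'' \<le> gain_pol l \<pi>'"
    then have "gain_pol l \<pi>' = g" using gain_max[of \<pi>'] \<pi>2(1) by (metis order_antisym)
    then show "bias_pol l \<pi>' s \<le> bias_pol l \<pi>2 s"
      using bound[of \<pi>' s] min[of \<pi>'] \<pi>2(2)[of s] by simp
  qed
  then show ?thesis by blast
qed

lemma opt_adv_eq_adv_pol:
  assumes "adv_consistent l \<pi>"
  shows "opt_adv P0 P1 r0 r1 l s = adv_pol l \<pi> s"
proof -
  have "bias_opt P0 P1 r0 r1 l (SOME \<pi>. bias_opt P0 P1 r0 r1 l \<pi>)"
    using someI_ex[OF bias_opt_exists] .
  then have "adv_consistent l (SOME \<pi>. bias_opt P0 P1 r0 r1 l \<pi>)" by (rule bias_opt_imp_adv_consistent)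
  then show ?thesis unfolding opt_adv_def by (rule adv_consistent_adv_eq[OF _ assms])
qed

end


section \<open>Lipschitz continuity of the optimal advantage\<close>

context unichain_mdp
begin

lemma rpol_affine: "rpol l \<pi> t = (1 - l) * rpol 0 \<pi> t + l * rpol 1 \<pi> t"
  unfolding pol_r_def by (simp add: algebra_simps)

lemma bias_pol_affine: "bias_pol l \<pi> t = (1 - l) * bias_pol 0 \<pi> t + l * bias_pol 1 \<pi> t"
proof -
  define h where "h u = (1 - l) * bias_pol 0 \<pi> u + l * bias_pol 1 \<pi> u" for u
  define g where "g = (1 - l) * gain_pol 0 \<pi> + l * gain_pol 1 \<pi>"
  have poisson: "g + h u = backup l \<pi> h u" for u
  proof -
    have "g + h u = (1 - l) * (gain_pol 0 \<pi> + bias_pol 0 \<pi> u) + l * (gain_pol 1 \<pi> + bias_pol 1 \<pi> u)"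
      by (simp add: g_def h_def algebra_simps)
    also have "\<dots> = (1 - l) * backup 0 \<pi> (bias_pol 0 \<pi>) u + l * backup 1 \<pi> (bias_pol 1 \<pi>) u"
      by (simp only: poisson_bias_pol)
    also have "\<dots> = backup l \<pi> h u"
      using rpol_affine[of l \<pi> u] unfolding h_def mv_lincomb by (simp add: algebra_simps)
    finally show ?thesis .
  qed
  have "(\<Sum>u\<in>UNIV. stat \<pi> u * h u)
      = (1 - l) * (\<Sum>u\<in>UNIV. stat \<pi> u * bias_pol 0 \<pi> u) + l * (\<Sum>u\<in>UNIV. stat \<pi> u * bias_pol 1 \<pi> u)"
    unfolding sum_distrib_left sum.distrib[symmetric] by (rule sum.cong) (simp_all add: h_def algebra_simps)
  then have "(\<Sum>u\<in>UNIV. stat \<pi> u * h u) = 0" by (simp add: stat_mean_bias_pol)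
  with poisson_pol_eq(2)[OF poisson, of t] show ?thesis by (simp add: h_def)
qed

lemma adv_pol_affine: "adv_pol l \<pi> s = (1 - l) * adv_pol 0 \<pi> s + l * adv_pol 1 \<pi> s"
proof -
  have "bias_pol l \<pi> = (\<lambda>t. (1 - l) * bias_pol 0 \<pi> t + l * bias_pol 1 \<pi> t)"
    using bias_pol_affine by blast
  then show ?thesis unfolding adv_pol_eq by (simp only: mv_lincomb) (simp add: algebra_simps)
qed

lemma diameter_le_D_max: "diameter (Ppol \<pi>) \<le> D_max P0 P1"
  unfolding D_max_def by (rule Max_ge) auto

lemma D_max_nonneg: "0 \<le> D_max P0 P1"
  using diameter_le_D_max[of "{}"] diameter_nonneg[of "Ppol {}"] by linarith

text \<open>\<open>\<delta> = b(0) - b(1)\<close>, minus the \<open>l\<close>-derivative of the bias, solves the Poisson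
  equation with reward \<open>1\<^sub>\<pi>\<close>, whose centred values lie in \<open>[-1, 1]\<close>, so the span of
  \<open>\<delta>\<close> is at most \<open>2 D(P\<^sup>\<pi>)\<close>.\<close>

lemma adv_pol_slope_bound: "\<bar>adv_pol 1 \<pi> s - adv_pol 0 \<pi> s\<bar> \<le> 2 * D_max P0 P1 + 1"
proof -
  define \<delta> where "\<delta> t = bias_pol 0 \<pi> t - bias_pol 1 \<pi> t" for t
  define g where "g = gain_pol 0 \<pi> - gain_pol 1 \<pi>"
  define ind where "ind t = (if t \<in> \<pi> then 1 else 0 :: real)" for t
  have ind: "rpol 0 \<pi> t - rpol 1 \<pi> t = ind t" for t unfolding pol_r_def ind_def by simp
  have poisson: "g + \<delta> t = ind t + mv (Ppol \<pi>) \<delta> t" for t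
    using poisson_bias_pol[of 0 \<pi> t] poisson_bias_pol[of 1 \<pi> t] ind[of t]
    unfolding g_def \<delta>_def mv_diff by simp
  have "g = (\<Sum>t\<in>UNIV. stat \<pi> t * ind t)"
    unfolding g_def gain_pol_def ind[symmetric] by (simp add: right_diff_distrib sum_subtractf)
  then have "0 \<le> g" "g \<le> (\<Sum>t\<in>UNIV. stat \<pi> t)"
    unfolding ind_def by (auto intro!: sum_nonneg sum_mono simp: stat_nonneg)
  then have bounded: "\<bar>ind t - g\<bar> \<le> 1" for t
    unfolding ind_def using stat_dist_sum[OF Ppol, of \<pi>] by auto
  have "\<bar>\<delta> x - \<delta> y\<bar> \<le> 2 * D_max P0 P1" for x y
    using poisson_span_le_diameter[OF Ppol poisson bounded, of x y] diameter_le_D_max[of \<pi>] by linarith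
  then have "\<bar>mv P1 \<delta> s - mv P0 \<delta> s\<bar> \<le> 2 * D_max P0 P1"
    by (rule abs_mv_diff_le_span[OF stochastic_P1 stochastic_P0])
  moreover have "adv_pol 1 \<pi> s - adv_pol 0 \<pi> s = -1 - (mv P1 \<delta> s - mv P0 \<delta> s)"
    unfolding adv_pol_eq \<delta>_def mv_diff by simp
  ultimately show ?thesis by linarith
qed

lemma closed_adv_consistent: "closed {l. adv_consistent l \<pi>}"
proof -
  define A where "A s l = (1 - l) * adv_pol 0 \<pi> s + l * adv_pol 1 \<pi> s" for s l
  have "{l. adv_consistent l \<pi>} = (\<Inter>s. if s \<in> \<pi> then {l. 0 \<le> A s l} else {l. A s l \<le> 0})"
    unfolding adv_consistent_def A_def adv_pol_affine[symmetric] by auto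
  moreover have "continuous_on UNIV (A s)" for s unfolding A_def by (intro continuous_intros)
  ultimately show ?thesis
    by (auto intro!: closed_INT closed_Collect_le continuous_intros)
qed


lemma lipschitz_on_adv_consistent:
  "(2 * D_max P0 P1 + 1)-lipschitz_on {l. adv_consistent l \<pi>} (\<lambda>l. opt_adv P0 P1 r0 r1 l s)"
proof (rule lipschitz_onI)
  fix x y assume "x \<in> {l. adv_consistent l \<pi>}" "y \<in> {l. adv_consistent l \<pi>}"
  then have "opt_adv P0 P1 r0 r1 x s - opt_adv P0 P1 r0 r1 y s = (x - y) * (adv_pol 1 \<pi> s - adv_pol 0 \<pi> s)"
    using adv_pol_affine[of x \<pi> s] adv_pol_affine[of y \<pi> s] by (simp add: opt_adv_eq_adv_pol algebra_simps)
  then show "dist (opt_adv P0 P1 r0 r1 x s) (opt_adv P0 P1 r0 r1 y s) \<le> (2 * D_max P0 P1 + 1) * dist x y"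
    using adv_pol_slope_bound[of \<pi> s] by (simp add: dist_real_def abs_mult mult.commute mult_left_mono)
qed (simp add: D_max_nonneg)

end


theorem mainTheorem9:
  fixes P0 P1 :: "'s::finite \<Rightarrow> 's \<Rightarrow> real" and r0 r1 :: "'s \<Rightarrow> real" and s :: 's
  assumes "stochastic P0" and "stochastic P1"
    and "unichain P0 P1"
  shows "(2 * D_max P0 P1 + 1)-lipschitz_on UNIV (\<lambda>l. opt_adv P0 P1 r0 r1 l s)"
proof -
  interpret unichain_mdp P0 P1 r0 r1 using assms by unfold_locales
  have intervals: "(2 * D_max P0 P1 + 1)-lipschitz_on {a..b} (\<lambda>l. opt_adv P0 P1 r0 r1 l s)" for a b
    by (rule lipschitz_on_closed_Union[where I = UNIV and U = "\<lambda>\<pi>. {l. adv_consistent l \<pi>}"])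
      (use lipschitz_on_adv_consistent closed_adv_consistent adv_consistent_exists D_max_nonneg in auto)
  show ?thesis
  proof (rule lipschitz_onI)
    fix x y :: real
    show "dist (opt_adv P0 P1 r0 r1 x s) (opt_adv P0 P1 r0 r1 y s) \<le> (2 * D_max P0 P1 + 1) * dist x y"
      by (rule lipschitz_onD[OF intervals[of "min x y" "max x y"]]) auto
  qed (simp add: D_max_nonneg)
qed

end
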